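(* Let $\mathscr Q_n$ be a non-singular quadric in $\mathrm{PG}(n,q)$ of projective index $g$ with point-graph $\Gamma$, let $0\le s<g$, let $\alpha_s$ be an $s$-dimensional subspace contained in $\mathscr Q_n$, and let $\Gamma^*$ be the subgraph of $\Gamma$ induced on the set $\mathcal X_s$ of type (ii) points. Then $\Gamma^*$ is regular of degree $k$, where: (1) if $\mathscr Q_n=\mathcal E_{2r+1}$, $k=(q^{s+1}-1)+\dfrac{q^{s+2}(q^{r-s-1}+1)(q^{r-s-2}-1)}{q-1}$; (2) if $\mathscr Q_n=\mathcal H_{2r+1}$, $k=(q^{s+1}-1)+\dfrac{q^{s+2}(q^{r-s-2}+1)(q^{r-s-1}-1)}{q-1}$; (3) if $\mathscr Q_n=\mathcal P_{2r}$, $k=(q^{s+1}-1)+\dfrac{q^{s+2}(q^{r-s-2}+1)(q^{r-s-2}-1)}{q-1}$.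
   Context: A non-singular quadric $\mathscr Q_n$ in $\mathrm{PG}(n,q)$ is the point set of a non-degenerate quadric; its projective index $g$ is the largest dimension of a projective subspace contained in $\mathscr Q_n$. If $n=2r$, $\mathscr Q_n$ is the parabolic quadric $\mathcal P_{2r}$ ($g=r-1$); if $n=2r+1$, it is the elliptic quadric $\mathcal E_{2r+1}$ ($g=r-1$) or the hyperbolic quadric $\mathcal H_{2r+1}$ ($g=r$). The point-graph $\Gamma$ has vertex set the points of $\mathscr Q_n$, two distinct points adjacent iff the line joining them is contained in $\mathscr Q_n$. A point $X$ of $\mathscr Q_n$ is of type (ii) with respect to $\alpha_s$ if $X\notin\alpha_s$ and the $(s+1)$-space $\langle\alpha_s,X\rangle$ is contained in $\mathscr Q_n$. *)

theory Defs
  imports Complex_Main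
begin

text \<open>Vectors of V(n+1,q) are functions nat => 'a vanishing outside {0..n};
  'a is a finite field GF(q).\<close>

definition vecs :: "nat \<Rightarrow> (nat \<Rightarrow> 'a::field) set" where
  "vecs n = {x. \<forall>i>n. x i = 0}"

definition pt :: "(nat \<Rightarrow> 'a::field) \<Rightarrow> (nat \<Rightarrow> 'a) set" where
  "pt v = {(\<lambda>i. c * v i) | c. c \<noteq> 0}"

definition points :: "nat \<Rightarrow> (nat \<Rightarrow> 'a::field) set set" where
  "points n = {pt v | v. v \<in> vecs n \<and> v \<noteq> (\<lambda>i. 0)}"

definition indep :: "(nat \<Rightarrow> nat \<Rightarrow> 'a::field) \<Rightarrow> nat \<Rightarrow> bool" where
  "indep b k = (\<forall>c. (\<lambda>i. \<Sum>j<k. c j * b j i) = (\<lambda>i. 0) \<longrightarrow> (\<forall>j<k. c j = 0))"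

definition vspan :: "(nat \<Rightarrow> 'a::field) set \<Rightarrow> (nat \<Rightarrow> 'a) set" where
  "vspan A = {(\<lambda>i. \<Sum>a\<in>F. c a * a i) | F c. finite F \<and> F \<subseteq> A}"

definition join :: "(nat \<Rightarrow> 'a::field) set set \<Rightarrow> (nat \<Rightarrow> 'a) set set" where
  "join S = {pt v | v. v \<in> vspan (\<Union>S) \<and> v \<noteq> (\<lambda>i. 0)}"

definition is_subspace :: "nat \<Rightarrow> nat \<Rightarrow> (nat \<Rightarrow> 'a::field) set set \<Rightarrow> bool" where
  "is_subspace n d S = (\<exists>b. (\<forall>j<d+1. b j \<in> vecs n) \<and> indep b (d+1) \<and>
      S = {pt v | v. v \<in> vspan (b ` {..<d+1}) \<and> v \<noteq> (\<lambda>i. 0)})"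

definition lin_map :: "nat \<Rightarrow> (nat \<Rightarrow> nat \<Rightarrow> 'a::field) \<Rightarrow> (nat \<Rightarrow> 'a) \<Rightarrow> (nat \<Rightarrow> 'a)" where
  "lin_map n M x = (\<lambda>i. if i \<le> n then (\<Sum>j\<le>n. M i j * x j) else 0)"

definition hyp_form :: "nat \<Rightarrow> (nat \<Rightarrow> 'a::field) \<Rightarrow> 'a" where
  "hyp_form r x = (\<Sum>i<r+1. x (2*i) * x (2*i+1))"

definition par_form :: "nat \<Rightarrow> (nat \<Rightarrow> 'a::field) \<Rightarrow> 'a" where
  "par_form r x = x 0 ^ 2 + (\<Sum>i<r. x (2*i+1) * x (2*i+2))"

definition ell_form :: "nat \<Rightarrow> 'a \<Rightarrow> 'a \<Rightarrow> (nat \<Rightarrow> 'a::field) \<Rightarrow> 'a" where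
  "ell_form r d e x = (\<Sum>i<r. x (2*i) * x (2*i+1))
      + (x (2*r) ^ 2 + d * x (2*r) * x (2*r+1) + e * x (2*r+1) ^ 2)"

datatype qtype = Elliptic | Hyperbolic | Parabolic

definition zero_set :: "nat \<Rightarrow> ((nat \<Rightarrow> 'a::field) \<Rightarrow> 'a) \<Rightarrow> (nat \<Rightarrow> 'a) set set" where
  "zero_set n Q = {pt v | v. v \<in> vecs n \<and> v \<noteq> (\<lambda>i. 0) \<and> Q v = 0}"

definition is_quadric :: "qtype \<Rightarrow> nat \<Rightarrow> nat \<Rightarrow> (nat \<Rightarrow> 'a::field) set set \<Rightarrow> bool" where
  "is_quadric T n r QS = (\<exists>M. bij_betw (lin_map n M) (vecs n) (vecs n) \<and>
     (case T of
        Elliptic \<Rightarrow> n = 2*r+1 \<and> (\<exists>d e. (\<forall>t::'a. t^2 + d*t + e \<noteq> 0) \<and>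
                        QS = zero_set n (\<lambda>v. ell_form r d e (lin_map n M v)))
      | Hyperbolic \<Rightarrow> n = 2*r+1 \<and> QS = zero_set n (\<lambda>v. hyp_form r (lin_map n M v))
      | Parabolic \<Rightarrow> n = 2*r \<and> r \<ge> 1 \<and> QS = zero_set n (\<lambda>v. par_form r (lin_map n M v))))"

definition proj_index :: "nat \<Rightarrow> (nat \<Rightarrow> 'a::field) set set \<Rightarrow> int" where
  "proj_index n QS = (GREATEST d::int. d = -1 \<or>
      (d \<ge> 0 \<and> (\<exists>S. is_subspace n (nat d) S \<and> S \<subseteq> QS)))"

definition adj :: "(nat \<Rightarrow> 'a::field) set set \<Rightarrow> (nat \<Rightarrow> 'a) set \<Rightarrow> (nat \<Rightarrow> 'a) set \<Rightarrow> bool" where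
  "adj QS X Y = (X \<in> QS \<and> Y \<in> QS \<and> X \<noteq> Y \<and> join {X, Y} \<subseteq> QS)"

definition type2 :: "nat \<Rightarrow> (nat \<Rightarrow> 'a::field) set set \<Rightarrow> (nat \<Rightarrow> 'a) set set \<Rightarrow> (nat \<Rightarrow> 'a) set set" where
  "type2 n QS alpha = {X \<in> points n. X \<notin> alpha \<and> join (insert X alpha) \<subseteq> QS}"

definition deg :: "qtype \<Rightarrow> real \<Rightarrow> nat \<Rightarrow> nat \<Rightarrow> real" where
  "deg T q r s = (let e = int r - int s;
      (a, b) = (case T of Elliptic \<Rightarrow> (e - 1, e - 2)
                         | Hyperbolic \<Rightarrow> (e - 2, e - 1)
                         | Parabolic \<Rightarrow> (e - 2, e - 2))
     in (q^(s+1) - 1) + q^(s+2) * (q powi a + 1) * (q powi b - 1) / (q - 1))"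

end

theory Submission
  imports Defs "HOL-Library.Function_Algebras" "HOL-Library.FuncSet"
begin

text \<open>Work in the underlying vector space, with a quadratic form \<open>Q\<close> whose zero set is the
  quadric. Let \<open>A\<close> be the vector subspace underlying \<open>\<alpha>\<close> and \<open>x\<close> a vector of a type (ii)
  point \<open>X\<close>. Then \<open>C = A + \<langle>x\<rangle>\<close> is totally singular, and the type (ii) points adjacent to \<open>X\<close>
  are exactly the points spanned by singular vectors of \<open>C\<^sup>\<bottom>\<close> outside \<open>A \<union> \<langle>x\<rangle>\<close>.

  For a totally singular subspace \<open>C\<close> of a non-singular space \<open>U\<close> over \<open>GF(q)\<close>, the number of
  singular vectors in \<open>C\<^sup>\<bottom>\<close> is \<open>Z(U) - |U|/q + |U|/(q |C|)\<close>, where \<open>Z(U)\<close> is the number of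
  singular vectors of \<open>U\<close>: splitting off a hyperbolic pair \<open>(c, d)\<close> with \<open>c \<in> C\<close> divides \<open>|U|\<close>
  by \<open>q\<^sup>2\<close> and \<open>|C|\<close> by \<open>q\<close>, so the formula follows by induction on \<open>|C|\<close>. Applied to a maximal
  totally singular coordinate subspace of the canonical form, the same formula gives
  \<open>Z(U) = q^n + q^(g+1) - q^(n-g-1)\<close>; dividing the count of vectors by \<open>q - 1\<close> yields the degree.\<close>

definition scale :: "'a::field \<Rightarrow> (nat \<Rightarrow> 'a) \<Rightarrow> (nat \<Rightarrow> 'a)" where
  "scale c x = (\<lambda>i. c * x i)"

definition lin_subspace :: "(nat \<Rightarrow> 'a::field) set \<Rightarrow> bool" where
  "lin_subspace U \<longleftrightarrow> 0 \<in> U \<and> (\<forall>x\<in>U. \<forall>y\<in>U. x + y \<in> U) \<and> (\<forall>c. \<forall>x\<in>U. scale c x \<in> U)"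

lemma zero_fun_lambda [simp]: "(\<lambda>i. 0) = (0 :: nat \<Rightarrow> 'a::zero)"
  by (simp add: zero_fun_def)

lemma scale_add: "scale c (x + y) = scale c x + scale c y"
  by (auto simp: scale_def fun_eq_iff algebra_simps)
lemma scale_add_left: "scale (a + b) x = scale a x + scale b x"
  by (auto simp: scale_def fun_eq_iff algebra_simps)
lemma scale_scale: "scale a (scale b x) = scale (a * b) x"
  by (auto simp: scale_def fun_eq_iff)
lemma scale_one [simp]: "scale 1 x = x"
  by (auto simp: scale_def)
lemma scale_zero_left [simp]: "scale 0 x = 0"
  by (auto simp: scale_def fun_eq_iff)
lemma diff_eq_add_scale: "x - y = x + scale (-1) y"
  by (auto simp: scale_def fun_eq_iff)
lemma scale_eq_0_iff: "scale c x = 0 \<longleftrightarrow> c = 0 \<or> x = 0"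
  by (auto simp: scale_def fun_eq_iff)
lemma scale_inverse: "c \<noteq> 0 \<Longrightarrow> scale (inverse c) (scale c x) = x"
  by (simp add: scale_scale)
lemma scale_left_inj: "x \<noteq> 0 \<Longrightarrow> scale a x = scale b x \<longleftrightarrow> a = b"
  by (auto simp: scale_def fun_eq_iff)

lemma lin_subspaceD:
  assumes "lin_subspace U"
  shows "0 \<in> U" "x \<in> U \<Longrightarrow> y \<in> U \<Longrightarrow> x + y \<in> U" "x \<in> U \<Longrightarrow> scale c x \<in> U"
    "x \<in> U \<Longrightarrow> y \<in> U \<Longrightarrow> x - y \<in> U"
  using assms by (auto simp: lin_subspace_def diff_eq_add_scale)

lemma lin_subspace_scale_iff:
  "lin_subspace U \<Longrightarrow> c \<noteq> 0 \<Longrightarrow> scale c x \<in> U \<longleftrightarrow> x \<in> U"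
  by (metis lin_subspaceD(3) scale_inverse)

definition line :: "(nat \<Rightarrow> 'a::field) \<Rightarrow> (nat \<Rightarrow> 'a) set" where
  "line x = range (\<lambda>t. scale t x)"

lemma lin_subspace_line: "lin_subspace (line x)"
  unfolding lin_subspace_def line_def
  by (auto simp: scale_add_left[symmetric] scale_scale intro!: range_eqI[of _ _ 0])

lemma card_line: "x \<noteq> 0 \<Longrightarrow> card (line (x :: nat \<Rightarrow> 'a::{finite,field})) = card (UNIV :: 'a set)"
  unfolding line_def by (simp add: card_image inj_on_def scale_left_inj)

definition coord_subspace :: "nat set \<Rightarrow> (nat \<Rightarrow> 'a::zero) set" where
  "coord_subspace K = {v. \<forall>i. i \<notin> K \<longrightarrow> v i = 0}"

lemma lin_subspace_coord_subspace: "lin_subspace (coord_subspace K)"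
  by (auto simp: lin_subspace_def coord_subspace_def scale_def)

lemma coord_subspace_mono: "K \<subseteq> L \<Longrightarrow> coord_subspace K \<subseteq> coord_subspace L"
  by (auto simp: coord_subspace_def)

lemma vecs_eq_coord_subspace: "vecs n = coord_subspace {..n}"
  by (auto simp: vecs_def coord_subspace_def)

lemma lin_subspace_vecs: "lin_subspace (vecs n)"
  unfolding vecs_eq_coord_subspace by (rule lin_subspace_coord_subspace)

lemma bij_betw_restrict_coord_subspace:
  "bij_betw (\<lambda>v. restrict v K) (coord_subspace K :: (nat \<Rightarrow> 'a::zero) set) (Pi\<^sub>E K (\<lambda>_. UNIV))"
proof (rule bij_betw_imageI)
  show "inj_on (\<lambda>v. restrict v K) (coord_subspace K)"
    by (auto simp: inj_on_def coord_subspace_def fun_eq_iff restrict_def) metis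
  show "(\<lambda>v. restrict v K) ` (coord_subspace K :: (nat \<Rightarrow> 'a) set) = Pi\<^sub>E K (\<lambda>_. UNIV)"
  proof
    show "Pi\<^sub>E K (\<lambda>_. UNIV) \<subseteq> (\<lambda>v. restrict v K) ` (coord_subspace K :: (nat \<Rightarrow> 'a) set)"
    proof
      fix f :: "nat \<Rightarrow> 'a" assume "f \<in> Pi\<^sub>E K (\<lambda>_. UNIV)"
      then show "f \<in> (\<lambda>v. restrict v K) ` coord_subspace K"
        by (intro image_eqI[where x="\<lambda>i. if i \<in> K then f i else 0"])
           (auto simp: coord_subspace_def fun_eq_iff PiE_def extensional_def)
    qed
  qed auto
qed

lemma card_coord_subspace:
  assumes "finite K"
  shows "card (coord_subspace K :: (nat \<Rightarrow> 'a::{finite,zero}) set) = card (UNIV :: 'a set) ^ card K"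
proof -
  have "card (coord_subspace K :: (nat \<Rightarrow> 'a) set) = card (Pi\<^sub>E K (\<lambda>_. UNIV :: 'a set))"
    by (rule bij_betw_same_card[OF bij_betw_restrict_coord_subspace])
  then show ?thesis using assms by (simp add: card_PiE)
qed

lemma finite_coord_subspace:
  assumes "finite K"
  shows "finite (coord_subspace K :: (nat \<Rightarrow> 'a::{finite,zero}) set)"
proof -
  have "finite (Pi\<^sub>E K (\<lambda>_. UNIV :: 'a set))" using assms by (simp add: finite_PiE)
  then show ?thesis using bij_betw_finite[OF bij_betw_restrict_coord_subspace] by blast
qed

lemma card_vecs: "card (vecs n :: (nat \<Rightarrow> 'a::{finite,field}) set) = card (UNIV :: 'a set) ^ (n + 1)"
  and finite_vecs: "finite (vecs n :: (nat \<Rightarrow> 'a::{finite,field}) set)"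
  by (simp_all add: vecs_eq_coord_subspace card_coord_subspace finite_coord_subspace)

definition unit_vec :: "nat \<Rightarrow> nat \<Rightarrow> 'a::field" where
  "unit_vec j = (\<lambda>i. if i = j then 1 else 0)"

lemma unit_vec_in_coord_subspace: "j \<in> K \<Longrightarrow> unit_vec j \<in> coord_subspace K"
  by (auto simp: coord_subspace_def unit_vec_def)

lemma card_field_ge_2: "card (UNIV :: 'a::{finite,field} set) \<ge> 2"
proof -
  have "card {0::'a, 1} \<le> card (UNIV :: 'a set)" by (rule card_mono) auto
  then show ?thesis by simp
qed

definition polar :: "((nat \<Rightarrow> 'a::field) \<Rightarrow> 'a) \<Rightarrow> (nat \<Rightarrow> 'a) \<Rightarrow> (nat \<Rightarrow> 'a) \<Rightarrow> 'a" where
  "polar Q x y = Q (x + y) - Q x - Q y"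

locale quadratic_form =
  fixes Q :: "(nat \<Rightarrow> 'a::field) \<Rightarrow> 'a"
  assumes Q_scale: "Q (scale c x) = c^2 * Q x"
    and polar_add_left: "polar Q (x + y) z = polar Q x z + polar Q y z"
    and polar_scale_left: "polar Q (scale c x) y = c * polar Q x y"
begin

lemma Q_zero [simp]: "Q 0 = 0"
  using Q_scale[of 0] by simp

lemma polar_commute: "polar Q x y = polar Q y x"
  by (simp add: polar_def add.commute)

lemma polar_add_right: "polar Q z (x + y) = polar Q z x + polar Q z y"
  using polar_add_left polar_commute by metis

lemma polar_scale_right: "polar Q y (scale c x) = c * polar Q y x"
  using polar_scale_left polar_commute by metis

lemma polar_zero [simp]: "polar Q 0 y = 0" "polar Q y 0 = 0"
  using polar_scale_left[of 0] polar_scale_right[of _ 0] by simp_all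

lemma polar_diff_left: "polar Q (x - y) z = polar Q x z - polar Q y z"
  by (simp add: diff_eq_add_scale polar_add_left polar_scale_left)

lemma polar_diff_right: "polar Q z (x - y) = polar Q z x - polar Q z y"
  by (simp add: diff_eq_add_scale polar_add_right polar_scale_right)

lemma Q_add: "Q (x + y) = Q x + Q y + polar Q x y"
  by (simp add: polar_def)

lemma polar_self: "polar Q x x = 2 * Q x"
proof -
  have "x + x = scale 2 x" by (auto simp: scale_def fun_eq_iff)
  then show ?thesis using Q_scale[of 2 x] by (simp add: polar_def)
qed

lemma polar_totally_singular:
  "lin_subspace C \<Longrightarrow> \<forall>x\<in>C. Q x = 0 \<Longrightarrow> x \<in> C \<Longrightarrow> y \<in> C \<Longrightarrow> polar Q x y = 0"
  unfolding polar_def by (simp add: lin_subspaceD)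

end

lemma quadratic_form_compose_linear:
  assumes "quadratic_form F"
    and add: "\<And>x y. f (x + y) = f x + f y" and scale: "\<And>c x. f (scale c x) = scale c (f x)"
  shows "quadratic_form (\<lambda>v. F (f v))"
proof -
  have "polar (\<lambda>v. F (f v)) x y = polar F (f x) (f y)" for x y
    by (simp add: polar_def add)
  then show ?thesis using assms(1)
    by (simp add: quadratic_form_def add scale)
qed

definition orth :: "((nat \<Rightarrow> 'a::field) \<Rightarrow> 'a) \<Rightarrow> (nat \<Rightarrow> 'a) set \<Rightarrow> (nat \<Rightarrow> 'a) set" where
  "orth Q C = {v. \<forall>x\<in>C. polar Q v x = 0}"

definition singular_vecs :: "((nat \<Rightarrow> 'a::field) \<Rightarrow> 'a) \<Rightarrow> (nat \<Rightarrow> 'a) set \<Rightarrow> (nat \<Rightarrow> 'a) set" where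
  "singular_vecs Q S = {v \<in> S. Q v = 0}"

text \<open>In even characteristic the polar form of a non-singular parabolic form is degenerate, so
  only the singular vectors are required to lie outside the radical.\<close>
definition nonsingular_on :: "((nat \<Rightarrow> 'a::field) \<Rightarrow> 'a) \<Rightarrow> (nat \<Rightarrow> 'a) set \<Rightarrow> bool" where
  "nonsingular_on Q U \<longleftrightarrow> (\<forall>c\<in>U. c \<noteq> 0 \<and> Q c = 0 \<longrightarrow> (\<exists>d\<in>U. polar Q c d \<noteq> 0))"

section \<open>Singular vectors orthogonal to a totally singular subspace\<close>

lemma card_mult_eq_0:
  "card {p :: 'a::{finite,field} \<times> 'a. fst p * snd p = 0} = 2 * card (UNIV :: 'a set) - 1"
proof -
  let ?A = "{0} \<times> (UNIV :: 'a set)" and ?B = "(UNIV :: 'a set) \<times> {0}"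
  have "{p :: 'a \<times> 'a. fst p * snd p = 0} = ?A \<union> ?B" by auto
  moreover have "card ?A + card ?B = card (?A \<union> ?B) + 1"
    using card_Un_Int[of ?A ?B] by (simp add: Times_Int_Times)
  ultimately show ?thesis by (simp add: card_cartesian_product)
qed

lemma card_mult_eq_nonzero:
  assumes "t \<noteq> 0"
  shows "card {p :: 'a::{finite,field} \<times> 'a. fst p * snd p = t} = card (UNIV :: 'a set) - 1"
proof -
  have "{p :: 'a \<times> 'a. fst p * snd p = t} = (\<lambda>a. (a, t / a)) ` (UNIV - {0})"
    using assms by (auto simp: field_simps image_iff prod_eq_iff)
  moreover have "inj_on (\<lambda>a. (a, t / a)) (UNIV - {0::'a})" by (auto simp: inj_on_def)
  ultimately show ?thesis by (simp add: card_image card_Diff_singleton)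
qed

lemma real_card_mult_eq:
  "real (card {p :: 'a::{finite,field} \<times> 'a. fst p * snd p = t})
     = real (card (UNIV :: 'a set)) - 1 + (if t = 0 then real (card (UNIV :: 'a set)) else 0)"
  using card_field_ge_2[where 'a='a] card_mult_eq_0[where 'a='a] card_mult_eq_nonzero[of t]
  by (simp add: of_nat_diff)

lemma (in quadratic_form) exists_hyperbolic_partner:
  assumes "lin_subspace U" "nonsingular_on Q U" "c \<in> U" "c \<noteq> 0" "Q c = 0"
  obtains d where "d \<in> U" "Q d = 0" "polar Q c d = 1"
proof -
  obtain d0 where d0: "d0 \<in> U" "polar Q c d0 \<noteq> 0"
    using assms(2-5) unfolding nonsingular_on_def by blast
  define d1 where "d1 = scale (inverse (polar Q c d0)) d0"
  have c_d1: "polar Q c d1 = 1" using d0 by (simp add: d1_def polar_scale_right)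
  have "polar Q c c = 0" using polar_self \<open>Q c = 0\<close> by simp
  then have "polar Q c (d1 - scale (Q d1) c) = 1"
    by (simp add: polar_diff_right polar_scale_right c_d1)
  moreover have "Q (d1 - scale (Q d1) c) = 0"
    using \<open>Q c = 0\<close> c_d1
    by (simp add: diff_eq_add_scale scale_scale Q_add Q_scale polar_scale_right polar_commute[of d1 c])
  moreover have "d1 - scale (Q d1) c \<in> U" using assms d0 by (simp add: d1_def lin_subspaceD)
  ultimately show ?thesis using that by blast
qed

locale hyperbolic_pair = quadratic_form Q for Q :: "(nat \<Rightarrow> 'a::{finite,field}) \<Rightarrow> 'a" +
  fixes U :: "(nat \<Rightarrow> 'a) set" and c d :: "nat \<Rightarrow> 'a"
  assumes lin_subspace_U: "lin_subspace U" and c_in_U: "c \<in> U" and d_in_U: "d \<in> U"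
    and Q_c: "Q c = 0" and Q_d: "Q d = 0" and polar_c_d: "polar Q c d = 1"
begin

definition pair_compl :: "(nat \<Rightarrow> 'a) set" where
  "pair_compl = {w \<in> U. polar Q w c = 0 \<and> polar Q w d = 0}"

definition pair_sum :: "'a \<times> 'a \<times> (nat \<Rightarrow> 'a) \<Rightarrow> (nat \<Rightarrow> 'a)" where
  "pair_sum = (\<lambda>(a, b, w). scale a c + scale b d + w)"

lemma polar_d_c: "polar Q d c = 1"
  using polar_c_d polar_commute by metis

lemma polar_c_c: "polar Q c c = 0"
  using polar_self Q_c by simp

lemma polar_d_d: "polar Q d d = 0"
  using polar_self Q_d by simp

lemma pair_compl_subset: "pair_compl \<subseteq> U"
  by (auto simp: pair_compl_def)

lemma lin_subspace_pair_compl: "lin_subspace pair_compl"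
  using lin_subspace_U unfolding lin_subspace_def pair_compl_def
  by (auto simp: polar_add_left polar_scale_left)

lemma polar_pair_sum:
  assumes "w \<in> pair_compl"
  shows "polar Q (scale a c + scale b d + w) d = a" "polar Q (scale a c + scale b d + w) c = b"
  using assms by (simp_all add: pair_compl_def polar_add_left polar_scale_left
      polar_c_d polar_d_d polar_c_c polar_d_c)

lemma Q_pair_sum: "w \<in> pair_compl \<Longrightarrow> Q (scale a c + scale b d + w) = a * b + Q w"
  by (simp add: pair_compl_def Q_add polar_add_left polar_scale_left polar_scale_right Q_scale
      Q_c Q_d polar_c_d polar_commute[of w])

lemma pair_decomposition:
  assumes "v \<in> U"
  shows "v - scale (polar Q v d) c - scale (polar Q v c) d \<in> pair_compl"
    and "v = scale (polar Q v d) c + scale (polar Q v c) d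
             + (v - scale (polar Q v d) c - scale (polar Q v c) d)"
  using assms lin_subspace_U c_in_U d_in_U
  by (auto simp: pair_compl_def polar_diff_left polar_scale_left polar_c_c polar_d_c polar_c_d
      polar_d_d lin_subspaceD)

lemma bij_betw_pair_sum: "bij_betw pair_sum (UNIV \<times> UNIV \<times> pair_compl) U"
proof (rule bij_betw_imageI)
  show "inj_on pair_sum (UNIV \<times> UNIV \<times> pair_compl)"
  proof (rule inj_onI, clarsimp)
    fix a b w a' b' w'
    assume w: "w \<in> pair_compl" "w' \<in> pair_compl" and "pair_sum (a, b, w) = pair_sum (a', b', w')"
    then have eq: "scale a c + scale b d + w = scale a' c + scale b' d + w'"
      by (simp add: pair_sum_def)
    have "a = a'" "b = b'"
      using polar_pair_sum[OF w(1), of a b] polar_pair_sum[OF w(2), of a' b'] eq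
      by simp_all
    then show "a = a' \<and> b = b' \<and> w = w'" using eq by simp
  qed
  show "pair_sum ` (UNIV \<times> UNIV \<times> pair_compl) = U"
  proof
    show "pair_sum ` (UNIV \<times> UNIV \<times> pair_compl) \<subseteq> U"
      using lin_subspace_U pair_compl_subset c_in_U d_in_U
        by (auto simp: pair_sum_def lin_subspaceD)
    show "U \<subseteq> pair_sum ` (UNIV \<times> UNIV \<times> pair_compl)"
    proof
      fix v assume "v \<in> U"
      then show "v \<in> pair_sum ` (UNIV \<times> UNIV \<times> pair_compl)"
        using pair_decomposition[of v]
        by (intro image_eqI[of _ _
              "(polar Q v d, polar Q v c, v - scale (polar Q v d) c - scale (polar Q v c) d)"])
           (auto simp: pair_sum_def)
    qed
  qed
qed

lemma card_eq_pair_compl: "card U = card (UNIV :: 'a set) ^ 2 * card pair_compl"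
  using bij_betw_same_card[OF bij_betw_pair_sum]
    by (simp add: card_cartesian_product power2_eq_square)

lemma card_singular_vecs_eq_pair_compl:
  assumes "finite U"
  defines "q \<equiv> real (card (UNIV :: 'a set))"
  shows "real (card (singular_vecs Q U))
           = q * real (card (singular_vecs Q pair_compl)) + (q - 1) * real (card pair_compl)"
proof -
  have fin: "finite pair_compl" using assms(1) pair_compl_subset finite_subset by blast
  define S where "S = (SIGMA w:pair_compl. {p :: 'a \<times> 'a. fst p * snd p = - Q w})"
  have "bij_betw (\<lambda>(w, p). pair_sum (fst p, snd p, w)) S (singular_vecs Q U)"
  proof (rule bij_betw_imageI)
    show "inj_on (\<lambda>(w, p). pair_sum (fst p, snd p, w)) S"
      using bij_betw_imp_inj_on[OF bij_betw_pair_sum]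
      by (auto simp: S_def inj_on_def prod_eq_iff)
    show "(\<lambda>(w, p). pair_sum (fst p, snd p, w)) ` S = singular_vecs Q U"
    proof
      show "(\<lambda>(w, p). pair_sum (fst p, snd p, w)) ` S \<subseteq> singular_vecs Q U"
        using lin_subspace_U c_in_U d_in_U pair_compl_subset
        by (auto simp: S_def singular_vecs_def pair_sum_def Q_pair_sum lin_subspaceD)
      show "singular_vecs Q U \<subseteq> (\<lambda>(w, p). pair_sum (fst p, snd p, w)) ` S"
      proof
        fix v assume v: "v \<in> singular_vecs Q U"
        then obtain a b w where abw: "w \<in> pair_compl" "v = pair_sum (a, b, w)"
          using bij_betw_imp_surj_on[OF bij_betw_pair_sum] by (force simp: singular_vecs_def)
        then have "a * b = - Q w" using v Q_pair_sum[OF abw(1), of a b]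
          by (simp add: singular_vecs_def pair_sum_def eq_neg_iff_add_eq_0)
        then show "v \<in> (\<lambda>(w, p). pair_sum (fst p, snd p, w)) ` S"
          using abw by (auto simp: S_def image_iff intro!: bexI[of _ "(w, a, b)"])
      qed
    qed
  qed
  then have "real (card (singular_vecs Q U))
      = (\<Sum>w\<in>pair_compl. real (card {p :: 'a \<times> 'a. fst p * snd p = - Q w}))"
    using fin by (simp add: bij_betw_same_card[symmetric] S_def card_SigmaI)
  also have "\<dots> = (\<Sum>w\<in>pair_compl. (q - 1) + (if Q w = 0 then q else 0))"
    unfolding q_def by (simp add: real_card_mult_eq)
  also have "\<dots> = q * real (card (singular_vecs Q pair_compl)) + (q - 1) * real (card pair_compl)"
    using fin by (simp add: sum.distrib sum.If_cases singular_vecs_def Int_def conj_commute)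
  finally show ?thesis .
qed

lemma nonsingular_on_pair_compl:
  assumes "nonsingular_on Q U"
  shows "nonsingular_on Q pair_compl"
  unfolding nonsingular_on_def
proof (intro ballI impI)
  fix w assume w: "w \<in> pair_compl" "w \<noteq> 0 \<and> Q w = 0"
  then obtain v where v: "v \<in> U" "polar Q w v \<noteq> 0"
    using assms pair_compl_subset unfolding nonsingular_on_def by blast
  let ?w = "v - scale (polar Q v d) c - scale (polar Q v c) d"
  have "polar Q w v = polar Q w (scale (polar Q v d) c + scale (polar Q v c) d + ?w)"
    using pair_decomposition(2)[OF v(1)] by simp
  also have "\<dots> = polar Q w ?w"
    by (simp only: polar_add_right polar_scale_right) (use w(1) in \<open>simp add: pair_compl_def\<close>)
  finally have "polar Q w v = polar Q w ?w" .
  then show "\<exists>d\<in>pair_compl. polar Q w d \<noteq> 0" using pair_decomposition(1)[OF v(1)] v(2) by auto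
qed

lemma inj_on_line_sum: "inj_on (\<lambda>(a, w). scale a c + w) (UNIV \<times> pair_compl)"
proof (rule inj_onI, clarsimp)
  fix a w a' w' assume "w \<in> pair_compl" "w' \<in> pair_compl" "scale a c + w = scale a' c + w'"
  then have "pair_sum (a, 0, w) = pair_sum (a', 0, w')" by (simp add: pair_sum_def)
  with \<open>w \<in> pair_compl\<close> \<open>w' \<in> pair_compl\<close> show "a = a' \<and> w = w'"
    using bij_betw_imp_inj_on[OF bij_betw_pair_sum] unfolding inj_on_def by blast
qed

definition pair_proj :: "(nat \<Rightarrow> 'a) set \<Rightarrow> (nat \<Rightarrow> 'a) set" where
  "pair_proj C = (\<lambda>x. x - scale (polar Q x d) c) ` C"

context
  fixes C :: "(nat \<Rightarrow> 'a) set"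
  assumes lin_subspace_C: "lin_subspace C" and C_subset: "C \<subseteq> U" and c_in_C: "c \<in> C"
    and C_singular: "\<forall>x\<in>C. Q x = 0"
begin

lemma polar_C: "x \<in> C \<Longrightarrow> y \<in> C \<Longrightarrow> polar Q x y = 0"
  using polar_totally_singular[OF lin_subspace_C C_singular] by blast

lemma pair_proj_subset: "pair_proj C \<subseteq> pair_compl"
  using C_subset c_in_U lin_subspace_U polar_C[OF _ c_in_C]
  by (auto simp: pair_proj_def pair_compl_def lin_subspaceD polar_diff_left polar_scale_left
      polar_c_c polar_c_d)

lemma pair_proj_singular: "\<forall>x\<in>pair_proj C. Q x = 0"
  using C_singular Q_c polar_C[OF _ c_in_C]
  by (auto simp: pair_proj_def diff_eq_add_scale scale_scale Q_add Q_scale polar_scale_right)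

lemma lin_subspace_pair_proj: "lin_subspace (pair_proj C)"
  unfolding lin_subspace_def
proof (intro conjI ballI allI)
  have "(0 :: nat \<Rightarrow> 'a) = 0 - scale (polar Q 0 d) c" by simp
  then show "0 \<in> pair_proj C"
    unfolding pair_proj_def using lin_subspaceD(1)[OF lin_subspace_C] by (rule image_eqI)
next
  fix x y assume "x \<in> pair_proj C" "y \<in> pair_proj C"
  then obtain x' y' where xy: "x' \<in> C" "x = x' - scale (polar Q x' d) c"
    "y' \<in> C" "y = y' - scale (polar Q y' d) c" by (auto simp: pair_proj_def)
  have "x + y = (x' + y') - scale (polar Q (x' + y') d) c"
    by (simp add: xy polar_add_left scale_add_left)
  then show "x + y \<in> pair_proj C"
    unfolding pair_proj_def
    by (intro image_eqI[where x="x' + y'"]) (use xy lin_subspace_C in \<open>auto simp: lin_subspaceD\<close>)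
next
  fix a x assume "x \<in> pair_proj C"
  then obtain x' where xy: "x' \<in> C" "x = x' - scale (polar Q x' d) c" by (auto simp: pair_proj_def)
  have "scale a x = scale a x' - scale (polar Q (scale a x') d) c"
    unfolding polar_scale_left xy by (simp add: scale_def fun_eq_iff algebra_simps)
  then show "scale a x \<in> pair_proj C"
    unfolding pair_proj_def
    by (intro image_eqI[where x="scale a x'"]) (use xy lin_subspace_C in \<open>auto simp: lin_subspaceD\<close>)
qed

lemma line_sum_pair_proj: "(\<lambda>(a, w). scale a c + w) ` (UNIV \<times> pair_proj C) = C"
proof
  show "(\<lambda>(a, w). scale a c + w) ` (UNIV \<times> pair_proj C) \<subseteq> C"
    using lin_subspace_C c_in_C by (auto simp: pair_proj_def lin_subspaceD)
  show "C \<subseteq> (\<lambda>(a, w). scale a c + w) ` (UNIV \<times> pair_proj C)"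
  proof
    fix x assume "x \<in> C"
    then show "x \<in> (\<lambda>(a, w). scale a c + w) ` (UNIV \<times> pair_proj C)"
      by (intro image_eqI[of _ _ "(polar Q x d, x - scale (polar Q x d) c)"]) (auto simp: pair_proj_def)
  qed
qed

lemma card_eq_pair_proj: "card C = card (UNIV :: 'a set) * card (pair_proj C)"
proof -
  have "inj_on (\<lambda>(a, w). scale a c + w) (UNIV \<times> pair_proj C)"
    by (rule inj_on_subset[OF inj_on_line_sum]) (use pair_proj_subset in auto)
  then show ?thesis
    using card_image line_sum_pair_proj by (fastforce simp: card_cartesian_product)
qed

lemma singular_orth_subset_pair_proj:
  "singular_vecs Q (orth Q C \<inter> U)
     \<subseteq> (\<lambda>(a, w). scale a c + w) ` (UNIV \<times> singular_vecs Q (orth Q (pair_proj C) \<inter> pair_compl))"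
proof
  fix v assume v: "v \<in> singular_vecs Q (orth Q C \<inter> U)"
  let ?w = "v - scale (polar Q v d) c - scale (polar Q v c) d"
  have v_c: "polar Q v c = 0" using v c_in_C by (simp add: singular_vecs_def orth_def)
  have w: "?w \<in> pair_compl" and v_eq: "v = scale (polar Q v d) c + scale (polar Q v c) d + ?w"
    using pair_decomposition[of v] v by (auto simp: singular_vecs_def)
  have "Q ?w = 0" using Q_pair_sum[OF w, of "polar Q v d" "polar Q v c"] v_eq v v_c
    by (simp add: singular_vecs_def)
  moreover have "?w \<in> orth Q (pair_proj C)"
  proof (unfold orth_def, intro CollectI ballI)
    fix y assume "y \<in> pair_proj C"
    then obtain x where x: "x \<in> C" "y = x - scale (polar Q x d) c" by (auto simp: pair_proj_def)
    have "polar Q v x = 0" using v x by (simp add: singular_vecs_def orth_def)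
    then show "polar Q ?w y = 0" using x v_c w polar_C[OF c_in_C x(1)]
      by (simp add: pair_compl_def polar_diff_left polar_diff_right polar_scale_left polar_scale_right
          polar_commute[of d x] polar_c_c polar_d_c)
  qed
  ultimately show "v \<in> (\<lambda>(a, w). scale a c + w)
      ` (UNIV \<times> singular_vecs Q (orth Q (pair_proj C) \<inter> pair_compl))"
    using v_eq v_c w by (intro image_eqI[of _ _ "(polar Q v d, ?w)"]) (auto simp: singular_vecs_def)
qed

lemma pair_proj_subset_singular_orth:
  assumes "w \<in> singular_vecs Q (orth Q (pair_proj C) \<inter> pair_compl)"
  shows "scale a c + w \<in> singular_vecs Q (orth Q C \<inter> U)"
proof -
  have "scale a c + w \<in> U"
    using assms pair_compl_subset c_in_U lin_subspace_U
      by (auto simp: singular_vecs_def lin_subspaceD)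
  moreover have "Q (scale a c + w) = 0"
    using assms Q_pair_sum[of w a 0] by (simp add: singular_vecs_def)
  moreover have "scale a c + w \<in> orth Q C"
  proof (unfold orth_def, intro CollectI ballI)
    fix x assume x: "x \<in> C"
    then have "polar Q w (x - scale (polar Q x d) c) = 0"
      using assms by (auto simp: singular_vecs_def orth_def pair_proj_def)
    moreover have "polar Q w c = 0" using assms by (simp add: singular_vecs_def pair_compl_def)
    ultimately show "polar Q (scale a c + w) x = 0" using polar_C[OF c_in_C x]
      by (simp add: polar_add_left polar_scale_left polar_diff_right polar_scale_right)
  qed
  ultimately show ?thesis by (simp add: singular_vecs_def)
qed

lemma card_singular_orth_eq_pair_proj:
  "card (singular_vecs Q (orth Q C \<inter> U))
     = card (UNIV :: 'a set) * card (singular_vecs Q (orth Q (pair_proj C) \<inter> pair_compl))"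
proof -
  have "inj_on (\<lambda>(a, w). scale a c + w) (UNIV \<times> singular_vecs Q (orth Q (pair_proj C) \<inter> pair_compl))"
    using inj_on_line_sum by (rule inj_on_subset) (auto simp: singular_vecs_def)
  moreover have "singular_vecs Q (orth Q C \<inter> U)
     = (\<lambda>(a, w). scale a c + w) ` (UNIV \<times> singular_vecs Q (orth Q (pair_proj C) \<inter> pair_compl))"
    by (intro subset_antisym singular_orth_subset_pair_proj) (auto intro: pair_proj_subset_singular_orth)
  ultimately show ?thesis by (simp add: card_image card_cartesian_product)
qed

end

end

theorem card_singular_orth:
  fixes Q :: "(nat \<Rightarrow> 'a::{finite,field}) \<Rightarrow> 'a"
  defines "q \<equiv> real (card (UNIV :: 'a set))"
  assumes "quadratic_form Q" "finite U" "lin_subspace U" "nonsingular_on Q U"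
    and "lin_subspace C" "C \<subseteq> U" "\<forall>x\<in>C. Q x = 0"
  shows "real (card (singular_vecs Q (orth Q C \<inter> U)))
           = real (card (singular_vecs Q U)) - real (card U) / q + real (card U) / (q * real (card C))"
  using assms(3-)
proof (induction "card C" arbitrary: U C rule: less_induct)
  case less
  interpret quadratic_form Q by fact
  have q: "q \<ge> 2" using card_field_ge_2[where 'a='a] by (simp add: q_def)
  show ?case
  proof (cases "C = {0}")
    case True
    then show ?thesis by (simp add: orth_def)
  next
    case False
    then obtain c where c: "c \<in> C" "c \<noteq> 0" using lin_subspaceD(1)[OF less.prems(4)] by blast
    obtain d where d: "d \<in> U" "Q d = 0" "polar Q c d = 1"
      using exists_hyperbolic_partner[OF less.prems(2,3)] c less.prems(5,6) by blast
    interpret hyperbolic_pair Q U c d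
      using less.prems(2,5,6) c d by unfold_locales auto
    have fin: "finite pair_compl" using less.prems(1) pair_compl_subset
      by (rule finite_subset[rotated])
    have C_card: "card C = card (UNIV :: 'a set) * card (pair_proj C)"
      by (rule card_eq_pair_proj[OF less.prems(4,5) c(1) less.prems(6)])
    moreover have "card C > 0" using c(1) less.prems(1,5) finite_subset
      by (auto simp: card_gt_0_iff)
    ultimately have smaller: "card (pair_proj C) < card C"
      using card_field_ge_2[where 'a='a] by simp
    have IH: "real (card (singular_vecs Q (orth Q (pair_proj C) \<inter> pair_compl)))
       = real (card (singular_vecs Q pair_compl)) - real (card pair_compl) / q
         + real (card pair_compl) / (q * real (card (pair_proj C)))"
      using less.hyps[OF smaller fin lin_subspace_pair_compl
          nonsingular_on_pair_compl[OF less.prems(3)]]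
        lin_subspace_pair_proj pair_proj_subset pair_proj_singular less.prems(4-6) c(1) by blast
    have "real (card (pair_proj C)) > 0" using smaller C_card
      by (cases "card (pair_proj C) = 0") auto
    then show ?thesis using IH q
      by (simp add: card_singular_orth_eq_pair_proj[OF less.prems(4,5) c(1) less.prems(6)] C_card
          card_singular_vecs_eq_pair_compl[OF less.prems(1)] card_eq_pair_compl q_def field_simps
          power2_eq_square)
  qed
qed

section \<open>The canonical forms\<close>

lemma nonsingular_on_if_maximal:
  assumes "C \<subseteq> U" "singular_vecs Q (orth Q C \<inter> U) \<subseteq> C"
    and "\<And>w. w \<in> C \<Longrightarrow> \<forall>d\<in>U. polar Q w d = 0 \<Longrightarrow> w = 0"
  shows "nonsingular_on Q U"
  using assms unfolding nonsingular_on_def singular_vecs_def orth_def by blast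

lemma card_singular_vecs_if_maximal:
  fixes Q :: "(nat \<Rightarrow> 'a::{finite,field}) \<Rightarrow> 'a" and K :: "nat set"
  defines "q \<equiv> real (card (UNIV :: 'a set))" and "C \<equiv> coord_subspace K :: (nat \<Rightarrow> 'a) set"
  assumes "quadratic_form Q" "K \<subseteq> {..m}" "card K = k" "k \<le> m"
    and singular: "\<forall>x\<in>C. Q x = 0"
    and maximal: "singular_vecs Q (orth Q C \<inter> vecs m) \<subseteq> C"
    and radical: "\<And>w. w \<in> C \<Longrightarrow> \<forall>d\<in>vecs m. polar Q w d = 0 \<Longrightarrow> w = 0"
  shows "nonsingular_on Q (vecs m)"
    and "real (card (singular_vecs Q (vecs m))) = q ^ m + q ^ k - q ^ (m - k)"
proof -
  interpret quadratic_form Q by fact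
  have fin: "finite K" using assms(4) finite_subset by blast
  have C_vecs: "C \<subseteq> vecs m" unfolding C_def vecs_eq_coord_subspace
    by (rule coord_subspace_mono) fact
  show nonsing: "nonsingular_on Q (vecs m)"
    by (rule nonsingular_on_if_maximal[OF C_vecs maximal radical])
  have "C \<subseteq> singular_vecs Q (orth Q C \<inter> vecs m)"
    using polar_totally_singular[OF _ singular] lin_subspace_coord_subspace C_vecs singular
    by (auto simp: C_def singular_vecs_def orth_def)
  then have count: "real (card C)
      = real (card (singular_vecs Q (vecs m))) - q ^ (m + 1) / q + q ^ (m + 1) / (q * real (card C))"
    using card_singular_orth[OF assms(3) finite_vecs lin_subspace_vecs nonsing
        lin_subspace_coord_subspace C_vecs[unfolded C_def] singular[unfolded C_def]]
      maximal by (simp add: C_def card_vecs q_def)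
  have card_C: "real (card C) = q ^ k" using card_coord_subspace[OF fin] assms(5)
    by (simp add: C_def q_def)
  have "q > 0" using card_field_ge_2[where 'a='a] by (simp add: q_def)
  then have "q ^ (m + 1) / q = q ^ m" "q ^ (m + 1) / (q * q ^ k) = q ^ (m - k)"
    using \<open>k \<le> m\<close> by (simp_all add: power_add[symmetric] power_diff)
  with count show "real (card (singular_vecs Q (vecs m))) = q ^ m + q ^ k - q ^ (m - k)"
    unfolding card_C by linarith
qed

lemma even_odd_index_cases:
  fixes i :: nat
  obtains k where "i = 2 * k" | k where "i = 2 * k + 1"
  by (metis oddE evenE)

lemma mult_indicator [simp]:
  "x * (if P then 1 else 0) = (if P then x else 0)" "(if P then 1 else 0) * x = (if P then x else 0)"
  for x :: "'a::field"
  by auto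

lemma index_eq_iffs [simp]:
  "Suc (2 * i) \<noteq> 2 * k" "2 * k \<noteq> Suc (2 * i)" "Suc (2 * i) = Suc (2 * k) \<longleftrightarrow> i = k"
  "2 * i = 2 * k \<longleftrightarrow> i = k"
  by presburger+

lemma polar_hyp_form:
  "polar (hyp_form r) x y = (\<Sum>i<r+1. x (2*i) * y (2*i+1) + y (2*i) * x (2*i+1))"
  by (simp add: polar_def hyp_form_def sum.distrib[symmetric] algebra_simps sum_subtractf[symmetric])

lemma quadratic_form_hyp_form: "quadratic_form (hyp_form r)"
  by (simp add: quadratic_form_def polar_hyp_form hyp_form_def scale_def sum_distrib_left
      sum.distrib[symmetric] algebra_simps power2_eq_square)

lemma polar_hyp_form_unit_vec:
  assumes "k \<le> r"
  shows "polar (hyp_form r) v (unit_vec (2*k)) = v (2*k+1)"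
    and "polar (hyp_form r) v (unit_vec (2*k+1)) = v (2*k)"
  using assms by (simp_all add: polar_hyp_form unit_vec_def sum.delta)

lemma hyp_form_singular_coord:
  "\<forall>x\<in>coord_subspace ((\<lambda>i. 2*i) ` {..r}). hyp_form r x = 0"
proof
  fix x :: "nat \<Rightarrow> 'a" assume "x \<in> coord_subspace ((\<lambda>i. 2*i) ` {..r})"
  moreover have "2*i+1 \<notin> (\<lambda>i. 2*i) ` {..r}" for i by auto
  ultimately have "x (2*i+1) = 0" for i by (simp add: coord_subspace_def)
  then show "hyp_form r x = 0" by (simp add: hyp_form_def)
qed

lemma hyp_form_maximal_coord:
  "singular_vecs (hyp_form r) (orth (hyp_form r) (coord_subspace ((\<lambda>i. 2*i) ` {..r})) \<inter> vecs (2*r+1))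
     \<subseteq> coord_subspace ((\<lambda>i. 2*i) ` {..r})"
proof
  fix v
  assume "v \<in> singular_vecs (hyp_form r)
    (orth (hyp_form r) (coord_subspace ((\<lambda>i. 2*i) ` {..r})) \<inter> vecs (2*r+1))"
  then have v: "v \<in> orth (hyp_form r) (coord_subspace ((\<lambda>i. 2*i) ` {..r}))" "v \<in> vecs (2*r+1)"
    by (simp_all add: singular_vecs_def)
  have odd: "v (2*k+1) = 0" if "k \<le> r" for k
    using v(1) unit_vec_in_coord_subspace[of "2*k" "(\<lambda>i. 2*i) ` {..r}"]
      polar_hyp_form_unit_vec(1)[OF that, of v] that
    by (auto simp: orth_def)
  show "v \<in> coord_subspace ((\<lambda>i. 2*i) ` {..r})" unfolding coord_subspace_def
  proof (intro CollectI allI impI)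
    fix i assume i: "i \<notin> (\<lambda>i. 2*i) ` {..r}"
    show "v i = 0"
    proof (cases "i \<le> 2*r+1")
      case False
      with v(2) show ?thesis by (simp add: vecs_def)
    next
      case True
      with i odd show ?thesis by (cases i rule: even_odd_index_cases) auto
    qed
  qed
qed

lemma hyp_form_radical_coord:
  assumes "w \<in> coord_subspace ((\<lambda>i. 2*i) ` {..r})" "\<forall>d\<in>vecs (2*r+1). polar (hyp_form r) w d = 0"
  shows "w = 0"
proof -
  have "w (2*k) = 0" if "k \<le> r" for k
    using assms(2)[rule_format, of "unit_vec (2*k+1)"] polar_hyp_form_unit_vec(2)[OF that, of w] that
    by (auto simp: vecs_def unit_vec_def)
  then have "w i = 0" for i
    using assms(1) by (cases "i \<in> (\<lambda>i. 2*i) ` {..r}") (auto simp: coord_subspace_def)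
  then show "w = 0" by (simp add: fun_eq_iff)
qed

lemma hyp_form_counts:
  defines "q \<equiv> real (card (UNIV :: 'a::{finite,field} set))"
  shows "nonsingular_on (hyp_form r) (vecs (2*r+1) :: (nat \<Rightarrow> 'a) set)"
    and "real (card (singular_vecs (hyp_form r) (vecs (2*r+1) :: (nat \<Rightarrow> 'a) set)))
           = q ^ (2*r+1) + q ^ (r+1) - q ^ r"
proof -
  have "(\<lambda>i. 2*i) ` {..r} \<subseteq> {..2*r+1}" "card ((\<lambda>i. 2*i) ` {..r}) = r + 1" "r + 1 \<le> 2*r+1"
    by (auto simp: card_image inj_on_def)
  note counts = card_singular_vecs_if_maximal[OF quadratic_form_hyp_form this
      hyp_form_singular_coord hyp_form_maximal_coord hyp_form_radical_coord]
  show "nonsingular_on (hyp_form r) (vecs (2*r+1) :: (nat \<Rightarrow> 'a) set)"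
    using counts(1) by simp
  show "real (card (singular_vecs (hyp_form r) (vecs (2*r+1) :: (nat \<Rightarrow> 'a) set)))
           = q ^ (2*r+1) + q ^ (r+1) - q ^ r"
    using counts(2) by (simp add: q_def)
qed

lemma polar_par_form:
  "polar (par_form r) x y = 2 * x 0 * y 0 + (\<Sum>i<r. x (2*i+1) * y (2*i+2) + y (2*i+1) * x (2*i+2))"
  by (simp add: polar_def par_form_def sum.distrib[symmetric] algebra_simps power2_eq_square
      sum_subtractf[symmetric])

lemma quadratic_form_par_form: "quadratic_form (par_form r)"
  by (simp add: quadratic_form_def polar_par_form par_form_def scale_def sum_distrib_left
      sum.distrib[symmetric] algebra_simps power2_eq_square)

lemma polar_par_form_unit_vec:
  assumes "k < r"
  shows "polar (par_form r) v (unit_vec (2*k+1)) = v (2*k+2)"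
    and "polar (par_form r) v (unit_vec (2*k+2)) = v (2*k+1)"
  using assms by (simp_all add: polar_par_form unit_vec_def sum.delta)

lemma par_form_singular_coord:
  "\<forall>x\<in>coord_subspace ((\<lambda>i. 2*i+1) ` {..<r}). par_form r x = 0"
proof
  fix x :: "nat \<Rightarrow> 'a" assume "x \<in> coord_subspace ((\<lambda>i. 2*i+1) ` {..<r})"
  moreover have "2*i+2 \<notin> (\<lambda>i. 2*i+1) ` {..<r}" "0 \<notin> (\<lambda>i. 2*i+1) ` {..<r}" for i by auto
  ultimately have "x (2*i+2) = 0" "x 0 = 0" for i by (simp_all add: coord_subspace_def)
  then show "par_form r x = 0" by (simp add: par_form_def)
qed

lemma par_form_maximal_coord:
  "singular_vecs (par_form r) (orth (par_form r) (coord_subspace ((\<lambda>i. 2*i+1) ` {..<r})) \<inter> vecs (2*r))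
     \<subseteq> coord_subspace ((\<lambda>i. 2*i+1) ` {..<r})"
proof
  fix v
  assume "v \<in> singular_vecs (par_form r)
    (orth (par_form r) (coord_subspace ((\<lambda>i. 2*i+1) ` {..<r})) \<inter> vecs (2*r))"
  then have v: "v \<in> orth (par_form r) (coord_subspace ((\<lambda>i. 2*i+1) ` {..<r}))" "v \<in> vecs (2*r)"
    "par_form r v = 0"
    by (simp_all add: singular_vecs_def)
  have even: "v (2*k+2) = 0" if "k < r" for k
    using v(1) unit_vec_in_coord_subspace[of "2*k+1" "(\<lambda>i. 2*i+1) ` {..<r}"]
      polar_par_form_unit_vec(1)[OF that, of v] that
    by (auto simp: orth_def)
  then have "v 0 ^ 2 = 0" using v(3) by (simp add: par_form_def)
  then have zero: "v 0 = 0" by simp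
  show "v \<in> coord_subspace ((\<lambda>i. 2*i+1) ` {..<r})" unfolding coord_subspace_def
  proof (intro CollectI allI impI)
    fix i assume i: "i \<notin> (\<lambda>i. 2*i+1) ` {..<r}"
    show "v i = 0"
    proof (cases "i \<le> 2*r")
      case False
      with v(2) show ?thesis by (simp add: vecs_def)
    next
      case True
      show ?thesis
      proof (cases i rule: even_odd_index_cases)
        case (1 k)
        with True zero even show ?thesis by (cases k) auto
      next
        case (2 k)
        with True i show ?thesis by auto
      qed
    qed
  qed
qed

lemma par_form_radical_coord:
  assumes "w \<in> coord_subspace ((\<lambda>i. 2*i+1) ` {..<r})" "\<forall>d\<in>vecs (2*r). polar (par_form r) w d = 0"
  shows "w = 0"
proof -
  have "w (2*k+1) = 0" if "k < r" for k
    using assms(2)[rule_format, of "unit_vec (2*k+2)"] polar_par_form_unit_vec(2)[OF that, of w] that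
    by (auto simp: vecs_def unit_vec_def)
  then have "w i = 0" for i
    using assms(1) by (cases "i \<in> (\<lambda>i. 2*i+1) ` {..<r}") (auto simp: coord_subspace_def)
  then show "w = 0" by (simp add: fun_eq_iff)
qed

lemma par_form_counts:
  defines "q \<equiv> real (card (UNIV :: 'a::{finite,field} set))"
  shows "nonsingular_on (par_form r) (vecs (2*r) :: (nat \<Rightarrow> 'a) set)"
    and "real (card (singular_vecs (par_form r) (vecs (2*r) :: (nat \<Rightarrow> 'a) set))) = q ^ (2*r)"
proof -
  have "(\<lambda>i. 2*i+1) ` {..<r} \<subseteq> {..2*r}" "card ((\<lambda>i. 2*i+1) ` {..<r}) = r" "r \<le> 2*r"
    by (auto simp: card_image inj_on_def)
  note counts = card_singular_vecs_if_maximal[OF quadratic_form_par_form this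
      par_form_singular_coord par_form_maximal_coord par_form_radical_coord]
  show "nonsingular_on (par_form r) (vecs (2*r) :: (nat \<Rightarrow> 'a) set)"
    using counts(1) by simp
  show "real (card (singular_vecs (par_form r) (vecs (2*r) :: (nat \<Rightarrow> 'a) set))) = q ^ (2*r)"
    using counts(2) by (simp add: q_def mult_2)
qed

lemma anisotropic_binary_form:
  fixes a b d e :: "'a::field"
  assumes irred: "\<forall>t. t^2 + d*t + e \<noteq> 0" and zero: "a^2 + d*a*b + e*b^2 = 0"
  shows "a = 0 \<and> b = 0"
proof (cases "b = 0")
  case True
  then show ?thesis using zero by simp
next
  case False
  have "(a/b)^2 + d*(a/b) + e = (a^2 + d*a*b + e*b^2) / b^2"
    using False by (simp add: field_simps power2_eq_square)
  then have "(a/b)^2 + d*(a/b) + e = 0" using zero by simp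
  then show ?thesis using irred by blast
qed

lemma polar_ell_form:
  "polar (ell_form r d e) x y = (\<Sum>i<r. x (2*i) * y (2*i+1) + y (2*i) * x (2*i+1))
     + (2 * x (2*r) * y (2*r) + d * (x (2*r) * y (2*r+1) + y (2*r) * x (2*r+1))
        + 2 * e * x (2*r+1) * y (2*r+1))"
  by (simp add: polar_def ell_form_def sum.distrib[symmetric] algebra_simps power2_eq_square
      sum_subtractf[symmetric])

lemma quadratic_form_ell_form: "quadratic_form (ell_form r d e)"
  by (simp add: quadratic_form_def polar_ell_form ell_form_def scale_def sum_distrib_left
      sum.distrib[symmetric] algebra_simps power2_eq_square)

lemma polar_ell_form_unit_vec:
  assumes "k < r"
  shows "polar (ell_form r d e) v (unit_vec (2*k)) = v (2*k+1)"
    and "polar (ell_form r d e) v (unit_vec (2*k+1)) = v (2*k)"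
  using assms by (simp_all add: polar_ell_form unit_vec_def sum.delta)

lemma ell_form_singular_coord:
  "\<forall>x\<in>coord_subspace ((\<lambda>i. 2*i) ` {..<r}). ell_form r d e x = 0"
proof
  fix x :: "nat \<Rightarrow> 'a" assume "x \<in> coord_subspace ((\<lambda>i. 2*i) ` {..<r})"
  moreover have "2*i+1 \<notin> (\<lambda>i. 2*i) ` {..<r}" "2*r \<notin> (\<lambda>i. 2*i) ` {..<r}" for i by auto
  ultimately have "x (2*i+1) = 0" "x (2*r) = 0" for i by (simp_all add: coord_subspace_def)
  then show "ell_form r d e x = 0" by (simp add: ell_form_def)
qed

lemma ell_form_maximal_coord:
  assumes irred: "\<forall>t. t^2 + d*t + e \<noteq> 0"
  shows "singular_vecs (ell_form r d e)
      (orth (ell_form r d e) (coord_subspace ((\<lambda>i. 2*i) ` {..<r})) \<inter> vecs (2*r+1))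
     \<subseteq> coord_subspace ((\<lambda>i. 2*i) ` {..<r})"
proof
  fix v
  assume "v \<in> singular_vecs (ell_form r d e)
    (orth (ell_form r d e) (coord_subspace ((\<lambda>i. 2*i) ` {..<r})) \<inter> vecs (2*r+1))"
  then have v: "v \<in> orth (ell_form r d e) (coord_subspace ((\<lambda>i. 2*i) ` {..<r}))" "v \<in> vecs (2*r+1)"
    "ell_form r d e v = 0" by (simp_all add: singular_vecs_def)
  have odd: "v (2*k+1) = 0" if "k < r" for k
    using v(1) unit_vec_in_coord_subspace[of "2*k" "(\<lambda>i. 2*i) ` {..<r}"]
      polar_ell_form_unit_vec(1)[OF that, of d e v] that
    by (auto simp: orth_def)
  then have "v (2*r) ^ 2 + d * v (2*r) * v (2*r+1) + e * v (2*r+1) ^ 2 = 0"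
    using v(3) by (simp add: ell_form_def)
  then have top: "v (2*r) = 0" "v (2*r+1) = 0" using anisotropic_binary_form[OF irred] by blast+
  show "v \<in> coord_subspace ((\<lambda>i. 2*i) ` {..<r})" unfolding coord_subspace_def
  proof (intro CollectI allI impI)
    fix i assume i: "i \<notin> (\<lambda>i. 2*i) ` {..<r}"
    show "v i = 0"
    proof (cases "i < 2*r")
      case False
      with v(2) top show ?thesis by (cases "i \<le> 2*r+1") (auto simp: vecs_def le_Suc_eq)
    next
      case True
      with i odd show ?thesis by (cases i rule: even_odd_index_cases) auto
    qed
  qed
qed

lemma ell_form_radical_coord:
  assumes "w \<in> coord_subspace ((\<lambda>i. 2*i) ` {..<r})" "\<forall>d'\<in>vecs (2*r+1). polar (ell_form r d e) w d' = 0"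
  shows "w = 0"
proof -
  have "w (2*k) = 0" if "k < r" for k
    using assms(2)[rule_format, of "unit_vec (2*k+1)"] polar_ell_form_unit_vec(2)[OF that, of d e w] that
    by (auto simp: vecs_def unit_vec_def)
  then have "w i = 0" for i
    using assms(1) by (cases "i \<in> (\<lambda>i. 2*i) ` {..<r}") (auto simp: coord_subspace_def)
  then show "w = 0" by (simp add: fun_eq_iff)
qed

lemma ell_form_counts:
  fixes d e :: "'a::{finite,field}"
  defines "q \<equiv> real (card (UNIV :: 'a set))"
  assumes irred: "\<forall>t. t^2 + d*t + e \<noteq> 0"
  shows "nonsingular_on (ell_form r d e) (vecs (2*r+1))"
    and "real (card (singular_vecs (ell_form r d e) (vecs (2*r+1)))) = q ^ (2*r+1) + q ^ r - q ^ (r+1)"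
proof -
  have "(\<lambda>i. 2*i) ` {..<r} \<subseteq> {..2*r+1}" "card ((\<lambda>i. 2*i) ` {..<r}) = r" "r \<le> 2*r+1"
    by (auto simp: card_image inj_on_def)
  note counts = card_singular_vecs_if_maximal[OF quadratic_form_ell_form this
      ell_form_singular_coord ell_form_maximal_coord[OF irred] ell_form_radical_coord]
  show "nonsingular_on (ell_form r d e) (vecs (2*r+1))"
    using counts(1) by simp
  have "2*r+1-r = r+1" by simp
  then show "real (card (singular_vecs (ell_form r d e) (vecs (2*r+1)))) = q ^ (2*r+1) + q ^ r - q ^ (r+1)"
    using counts(2) by (simp add: q_def)
qed

lemma lin_map_add: "lin_map n M (x + y) = lin_map n M x + lin_map n M y"
  by (auto simp: lin_map_def fun_eq_iff algebra_simps sum.distrib)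

lemma lin_map_scale: "lin_map n M (scale c x) = scale c (lin_map n M x)"
  by (auto simp: lin_map_def fun_eq_iff scale_def sum_distrib_left algebra_simps)

lemma lin_map_zero: "lin_map n M 0 = 0"
  by (auto simp: lin_map_def fun_eq_iff)

context
  fixes n :: nat and M :: "nat \<Rightarrow> nat \<Rightarrow> 'a::field"
  assumes bij: "bij_betw (lin_map n M) (vecs n) (vecs n)"
begin

lemma nonsingular_on_compose_lin_map:
  assumes "nonsingular_on F (vecs n)"
  shows "nonsingular_on (\<lambda>v. F (lin_map n M v)) (vecs n)"
  unfolding nonsingular_on_def
proof (intro ballI impI)
  fix c assume c: "c \<in> vecs n" "c \<noteq> 0 \<and> F (lin_map n M c) = 0"
  have "lin_map n M c \<noteq> 0"
    using bij c lin_map_zero[of n M] lin_subspaceD(1)[OF lin_subspace_vecs]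
    unfolding bij_betw_def inj_on_def by metis
  moreover have "lin_map n M c \<in> vecs n" using bij c(1) by (auto simp: bij_betw_def)
  ultimately obtain d' where d': "d' \<in> vecs n" "polar F (lin_map n M c) d' \<noteq> 0"
    using assms c unfolding nonsingular_on_def by blast
  then obtain d where "d \<in> vecs n" "d' = lin_map n M d" using bij unfolding bij_betw_def by blast
  then show "\<exists>d\<in>vecs n. polar (\<lambda>v. F (lin_map n M v)) c d \<noteq> 0"
    using d' by (auto simp: polar_def lin_map_add)
qed

lemma card_singular_vecs_compose_lin_map:
  "card (singular_vecs (\<lambda>v. F (lin_map n M v)) (vecs n)) = card (singular_vecs F (vecs n))"
proof -
  have "bij_betw (lin_map n M)
      (singular_vecs (\<lambda>v. F (lin_map n M v)) (vecs n)) (singular_vecs F (vecs n))"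
    using bij unfolding bij_betw_def inj_on_def singular_vecs_def by auto
  then show ?thesis by (rule bij_betw_same_card)
qed

end

text \<open>The vector dimension of the maximal totally singular subspaces, i.e. the projective
  index plus one.\<close>
definition witt_index :: "qtype \<Rightarrow> nat \<Rightarrow> nat" where
  "witt_index T r = (case T of Hyperbolic \<Rightarrow> r + 1 | _ \<Rightarrow> r)"

lemma quadric_canonical_form:
  fixes QS :: "(nat \<Rightarrow> 'a::{finite,field}) set set" and T :: qtype and n r :: nat
  defines "q \<equiv> real (card (UNIV :: 'a set))" and "k \<equiv> witt_index T r"
  assumes "is_quadric T n r QS"
  obtains F M where "bij_betw (lin_map n M) (vecs n) (vecs n)"
    and "quadratic_form F" "nonsingular_on F (vecs n)"
    and "QS = zero_set n (\<lambda>v. F (lin_map n M v))"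
    and "real (card (singular_vecs F (vecs n))) = q ^ n + q ^ k - q ^ (n - k)"
    and "n = (case T of Parabolic \<Rightarrow> 2*r | _ \<Rightarrow> 2*r+1)"
proof -
  obtain M where bij: "bij_betw (lin_map n M) (vecs n) (vecs n)" and
    cases: "case T of
        Elliptic \<Rightarrow> n = 2*r+1 \<and> (\<exists>d e. (\<forall>t::'a. t^2 + d*t + e \<noteq> 0) \<and>
                        QS = zero_set n (\<lambda>v. ell_form r d e (lin_map n M v)))
      | Hyperbolic \<Rightarrow> n = 2*r+1 \<and> QS = zero_set n (\<lambda>v. hyp_form r (lin_map n M v))
      | Parabolic \<Rightarrow> n = 2*r \<and> r \<ge> 1 \<and> QS = zero_set n (\<lambda>v. par_form r (lin_map n M v))"
    using assms unfolding is_quadric_def by blast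
  show thesis
  proof (cases T)
    case Elliptic
    then obtain d e where "n = 2*r+1" "\<forall>t::'a. t^2 + d*t + e \<noteq> 0"
      "QS = zero_set n (\<lambda>v. ell_form r d e (lin_map n M v))" using cases by auto
    with Elliptic show thesis
      using that[OF bij quadratic_form_ell_form] ell_form_counts[of d e r]
      by (simp add: k_def q_def witt_index_def)
  next
    case Hyperbolic
    with cases have "n = 2*r+1" "QS = zero_set n (\<lambda>v. hyp_form r (lin_map n M v))" by auto
    with Hyperbolic show thesis
      using that[OF bij quadratic_form_hyp_form] hyp_form_counts[of r, where 'a='a]
      by (simp add: k_def q_def witt_index_def)
  next
    case Parabolic
    with cases have "n = 2*r" "QS = zero_set n (\<lambda>v. par_form r (lin_map n M v))" by auto
    with Parabolic show thesis
      using that[OF bij quadratic_form_par_form] par_form_counts[of r, where 'a='a]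
      by (simp add: k_def q_def witt_index_def mult_2)
  qed
qed

lemma quadric_equation:
  fixes QS :: "(nat \<Rightarrow> 'a::{finite,field}) set set" and T :: qtype and n r :: nat
  defines "q \<equiv> real (card (UNIV :: 'a set))" and "k \<equiv> witt_index T r"
  assumes "is_quadric T n r QS"
  obtains Q where "quadratic_form Q" "nonsingular_on Q (vecs n)" "QS = zero_set n Q"
    and "real (card (singular_vecs Q (vecs n))) = q ^ n + q ^ k - q ^ (n - k)"
    and "n = (case T of Parabolic \<Rightarrow> 2*r | _ \<Rightarrow> 2*r+1)"
proof -
  obtain F M where bij: "bij_betw (lin_map n M) (vecs n) (vecs n)" and F: "quadratic_form F"
    "nonsingular_on F (vecs n)" "QS = zero_set n (\<lambda>v. F (lin_map n M v))"
    "real (card (singular_vecs F (vecs n))) = q ^ n + q ^ k - q ^ (n - k)"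
    "n = (case T of Parabolic \<Rightarrow> 2*r | _ \<Rightarrow> 2*r+1)"
    using quadric_canonical_form[OF assms(3)] unfolding q_def k_def by blast
  show thesis
    using that[OF quadratic_form_compose_linear[OF F(1) lin_map_add[of n M] lin_map_scale[of n M]]
        nonsingular_on_compose_lin_map[OF bij F(2)] F(3)]
      card_singular_vecs_compose_lin_map[OF bij, of F] F(4,5)
    by simp
qed

lemma mem_pt_iff: "w \<in> pt v \<longleftrightarrow> (\<exists>c. c \<noteq> 0 \<and> w = scale c v)"
  by (auto simp: pt_def scale_def)

lemma pt_self: "v \<in> pt v"
  unfolding mem_pt_iff by (intro exI[of _ 1]) simp

lemma pt_scale:
  assumes "c \<noteq> 0"
  shows "pt (scale c w) = pt w"
proof (intro set_eqI iffI)
  fix x assume "x \<in> pt (scale c w)"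
  then obtain a where "a \<noteq> 0" "x = scale (a * c) w" unfolding mem_pt_iff scale_scale by blast
  with assms show "x \<in> pt w" unfolding mem_pt_iff by (intro exI[of _ "a * c"]) simp
next
  fix x assume "x \<in> pt w"
  then obtain a where "a \<noteq> 0" "x = scale a w" unfolding mem_pt_iff by blast
  with assms have "x = scale (a / c) (scale c w)" "a / c \<noteq> 0" by (simp_all add: scale_scale)
  then show "x \<in> pt (scale c w)" unfolding mem_pt_iff by blast
qed

lemma pt_eq_iff: "pt v = pt w \<longleftrightarrow> (\<exists>c. c \<noteq> 0 \<and> v = scale c w)"
proof
  assume "pt v = pt w"
  then show "\<exists>c. c \<noteq> 0 \<and> v = scale c w" using pt_self[of v] by (simp add: mem_pt_iff)
qed (use pt_scale in auto)

lemma pt_eq_if_mem: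
  assumes "x \<in> pt v" "x \<in> pt w"
  shows "pt v = pt w"
proof -
  from assms obtain a b where a: "a \<noteq> 0" "x = scale a v" and b: "b \<noteq> 0" "x = scale b w"
    unfolding mem_pt_iff by blast
  have "pt v = pt x" using pt_scale[OF a(1), of v] a(2) by simp
  also have "\<dots> = pt w" using pt_scale[OF b(1), of w] b(2) by simp
  finally show ?thesis .
qed

lemma card_pt: "v \<noteq> 0 \<Longrightarrow> card (pt (v :: nat \<Rightarrow> 'a::{finite,field})) = card (UNIV :: 'a set) - 1"
proof -
  assume "v \<noteq> 0"
  have "pt v = (\<lambda>c. scale c v) ` (UNIV - {0})" by (auto simp: mem_pt_iff)
  moreover have "inj_on (\<lambda>c. scale c v) (UNIV - {0})"
    using \<open>v \<noteq> 0\<close> by (simp add: inj_on_def scale_left_inj)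
  ultimately show ?thesis by (simp add: card_image card_Diff_singleton)
qed

lemma pt_eq_pt_iff_line:
  assumes "x \<noteq> 0" "y \<noteq> 0"
  shows "pt x = pt y \<longleftrightarrow> y \<in> line x"
proof
  assume "pt x = pt y"
  then show "y \<in> line x" using pt_eq_iff[of y x] by (auto simp: line_def)
next
  assume "y \<in> line x"
  then obtain c where "y = scale c x" by (auto simp: line_def)
  moreover from this have "c \<noteq> 0" using assms(2) by auto
  ultimately show "pt x = pt y" by (simp add: pt_scale)
qed

lemma pt_eq_line_minus_zero: "x \<noteq> 0 \<Longrightarrow> pt x = line x - {0}"
  by (auto simp: mem_pt_iff line_def scale_eq_0_iff)

lemma points_cases:
  assumes "X \<in> points n"
  obtains v where "X = pt v" "v \<in> vecs n" "v \<noteq> 0"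
  using assms by (auto simp: points_def)

lemma pt_in_points: "v \<in> vecs n \<Longrightarrow> v \<noteq> 0 \<Longrightarrow> pt v \<in> points n"
  by (auto simp: points_def)

lemma subset_vspan: "S \<subseteq> vspan S"
proof
  fix x assume "x \<in> S"
  then show "x \<in> vspan S"
    unfolding vspan_def by (intro CollectI exI[of _ "{x}"] exI[of _ "\<lambda>_. 1"]) auto
qed

lemma lin_subspace_vspan: "lin_subspace (vspan S)"
  unfolding lin_subspace_def
proof (intro conjI ballI allI)
  show "0 \<in> vspan S"
    unfolding vspan_def by (intro CollectI exI[of _ "{}"]) (auto simp: fun_eq_iff)
next
  fix x y assume "x \<in> vspan S" "y \<in> vspan S"
  then obtain F1 c1 F2 c2 where F: "finite F1" "F1 \<subseteq> S" "x = (\<lambda>i. \<Sum>a\<in>F1. c1 a * a i)"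
    "finite F2" "F2 \<subseteq> S" "y = (\<lambda>i. \<Sum>a\<in>F2. c2 a * a i)" unfolding vspan_def by blast
  have extend: "(\<Sum>a\<in>F. c a * a i) = (\<Sum>a\<in>F1 \<union> F2. (if a \<in> F then c a else 0) * a i)"
    if "F \<subseteq> F1 \<union> F2" for F c i
    using that F(1,4) by (intro sum.mono_neutral_cong_left) auto
  define c where "c a = (if a \<in> F1 then c1 a else 0) + (if a \<in> F2 then c2 a else 0)" for a
  have "x + y = (\<lambda>i. \<Sum>a\<in>F1 \<union> F2. c a * a i)"
    using extend[of F1 c1] extend[of F2 c2]
      by (simp add: F(3,6) c_def fun_eq_iff distrib_right sum.distrib)
  then show "x + y \<in> vspan S" using F unfolding vspan_def by blast
next
  fix t x assume "x \<in> vspan S"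
  then obtain F c where F: "finite F" "F \<subseteq> S" "x = (\<lambda>i. \<Sum>a\<in>F. c a * a i)"
    unfolding vspan_def by blast
  then have "scale t x = (\<lambda>i. \<Sum>a\<in>F. (t * c a) * a i)"
    by (simp add: scale_def sum_distrib_left mult.assoc)
  then show "scale t x \<in> vspan S"
    unfolding vspan_def by (intro CollectI exI[of _ F] exI[of _ "\<lambda>a. t * c a"]) (use F in auto)
qed

lemma lin_combination_in_subspace:
  fixes b :: "nat \<Rightarrow> nat \<Rightarrow> 'a::field" and k :: nat
  assumes "lin_subspace W" "\<forall>j<k. b j \<in> W"
  shows "(\<lambda>i. \<Sum>j<k. c j * b j i) \<in> W"
  using assms(2)
proof (induction k)
  case 0
  then show ?case using lin_subspaceD(1)[OF assms(1)] by simp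
next
  case (Suc k)
  have "(\<lambda>i. \<Sum>j<Suc k. c j * b j i) = (\<lambda>i. \<Sum>j<k. c j * b j i) + scale (c k) (b k)"
    by (simp add: fun_eq_iff scale_def)
  then show ?case using Suc lin_subspaceD(2,3)[OF assms(1)] by simp
qed

lemma vspan_least:
  assumes "lin_subspace W" "S \<subseteq> W"
  shows "vspan S \<subseteq> W"
proof
  fix x assume "x \<in> vspan S"
  then obtain F c where F: "finite F" "F \<subseteq> S" "x = (\<lambda>i. \<Sum>a\<in>F. c a * a i)"
    unfolding vspan_def by blast
  from F(1,2) have "(\<lambda>i. \<Sum>a\<in>F. c a * a i) \<in> W"
  proof (induction F rule: finite_induct)
    case empty
    then show ?case using lin_subspaceD(1)[OF assms(1)] by simp
  next
    case (insert y F)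
    then have "(\<lambda>i. \<Sum>a\<in>insert y F. c a * a i) = scale (c y) y + (\<lambda>i. \<Sum>a\<in>F. c a * a i)"
      by (simp add: scale_def fun_eq_iff)
    then show ?case using insert assms by (auto simp: lin_subspaceD)
  qed
  then show "x \<in> W" using F by simp
qed

lemma lin_subspace_lin_combinations:
  fixes b :: "nat \<Rightarrow> nat \<Rightarrow> 'a::field" and k :: nat
  shows "lin_subspace (range (\<lambda>c i. \<Sum>j<k. c j * b j i))"
  unfolding lin_subspace_def
proof (intro conjI ballI allI)
  have "0 = (\<lambda>i. \<Sum>j<k. 0 * b j i)" by (simp add: fun_eq_iff)
  then show "0 \<in> range (\<lambda>c i. \<Sum>j<k. c j * b j i)" by (rule ssubst) (rule rangeI)
next
  fix x y assume "x \<in> range (\<lambda>c i. \<Sum>j<k. c j * b j i)" "y \<in> range (\<lambda>c i. \<Sum>j<k. c j * b j i)"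
  then obtain c c' where "x = (\<lambda>i. \<Sum>j<k. c j * b j i)" "y = (\<lambda>i. \<Sum>j<k. c' j * b j i)" by blast
  then have "x + y = (\<lambda>i. \<Sum>j<k. (c j + c' j) * b j i)"
    by (simp add: fun_eq_iff distrib_right sum.distrib)
  then show "x + y \<in> range (\<lambda>c i. \<Sum>j<k. c j * b j i)" by (rule ssubst) (rule rangeI)
next
  fix t x assume "x \<in> range (\<lambda>c i. \<Sum>j<k. c j * b j i)"
  then obtain c where "x = (\<lambda>i. \<Sum>j<k. c j * b j i)" by blast
  then have "scale t x = (\<lambda>i. \<Sum>j<k. (t * c j) * b j i)"
    by (simp add: scale_def fun_eq_iff sum_distrib_left mult.assoc)
  then show "scale t x \<in> range (\<lambda>c i. \<Sum>j<k. c j * b j i)" by (rule ssubst) (rule rangeI)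
qed

lemma vspan_basis:
  fixes b :: "nat \<Rightarrow> nat \<Rightarrow> 'a::field" and k :: nat
  shows "vspan (b ` {..<k}) = range (\<lambda>c i. \<Sum>j<k. c j * b j i)"
proof
  have "b ` {..<k} \<subseteq> range (\<lambda>c i. \<Sum>j<k. c j * b j i)"
  proof
    fix v assume "v \<in> b ` {..<k}"
    then obtain l where "l < k" "v = b l" by blast
    then have "v = (\<lambda>i. \<Sum>j<k. (if j = l then 1 else 0) * b j i)" by (simp add: fun_eq_iff sum.delta)
    then show "v \<in> range (\<lambda>c i. \<Sum>j<k. c j * b j i)" by (rule ssubst) (rule rangeI)
  qed
  then show "vspan (b ` {..<k}) \<subseteq> range (\<lambda>c i. \<Sum>j<k. c j * b j i)"
    by (rule vspan_least[OF lin_subspace_lin_combinations])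
  show "range (\<lambda>c i. \<Sum>j<k. c j * b j i) \<subseteq> vspan (b ` {..<k})"
  proof
    fix v assume "v \<in> range (\<lambda>c i. \<Sum>j<k. c j * b j i)"
    then obtain c where v: "v = (\<lambda>i. \<Sum>j<k. c j * b j i)" by blast
    have "\<forall>j<k. b j \<in> vspan (b ` {..<k})" using subset_vspan[of "b ` {..<k}"] by auto
    then show "v \<in> vspan (b ` {..<k})"
      unfolding v by (rule lin_combination_in_subspace[OF lin_subspace_vspan])
  qed
qed

lemma card_vspan_indep:
  assumes "indep (b :: nat \<Rightarrow> nat \<Rightarrow> 'a::{finite,field}) k"
  shows "card (vspan (b ` {..<k})) = card (UNIV :: 'a set) ^ k"
proof -
  define comb where "comb c = (\<lambda>i. \<Sum>j<k. c j * b j i)" for c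
  have "range comb = comb ` Pi\<^sub>E {..<k} (\<lambda>_. UNIV)"
  proof (intro subset_antisym subsetI)
    fix v assume "v \<in> range comb"
    then obtain c where "v = comb c" by blast
    then have "v = comb (restrict c {..<k})" by (simp add: comb_def)
    then show "v \<in> comb ` Pi\<^sub>E {..<k} (\<lambda>_. UNIV)" by simp
  qed auto
  moreover have "inj_on comb (Pi\<^sub>E {..<k} (\<lambda>_. UNIV))"
  proof (rule inj_onI)
    fix c c' assume c: "c \<in> Pi\<^sub>E {..<k} (\<lambda>_. UNIV)" "c' \<in> Pi\<^sub>E {..<k} (\<lambda>_. UNIV)"
      and "comb c = comb c'"
    then have "(\<lambda>i. \<Sum>j<k. (c j - c' j) * b j i) = (\<lambda>i. 0)"
      by (simp add: comb_def fun_eq_iff left_diff_distrib sum_subtractf)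
    from assms[unfolded indep_def, rule_format, OF this] have eq: "\<forall>j<k. c j = c' j" by simp
    show "c = c'"
    proof
      fix j show "c j = c' j" using c eq by (cases "j < k") (auto simp: PiE_def extensional_def)
    qed
  qed
  ultimately have "card (range comb) = card (UNIV :: 'a set) ^ k" by (simp add: card_image card_PiE)
  moreover have "vspan (b ` {..<k}) = range comb" by (simp add: vspan_basis comb_def[abs_def])
  ultimately show ?thesis by simp
qed

definition add_line :: "(nat \<Rightarrow> 'a::field) set \<Rightarrow> (nat \<Rightarrow> 'a) \<Rightarrow> (nat \<Rightarrow> 'a) set" where
  "add_line A y = {a + scale t y | a t. a \<in> A}"

lemma subset_add_line: "A \<subseteq> add_line A y"
proof
  fix a assume "a \<in> A"
  then show "a \<in> add_line A y" unfolding add_line_def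
    by (intro CollectI exI[of _ a] exI[of _ 0]) simp
qed

lemma line_subset_add_line:
  assumes "lin_subspace A"
  shows "line y \<subseteq> add_line A y"
proof
  fix z assume "z \<in> line y"
  then obtain t where "z = 0 + scale t y" by (auto simp: line_def)
  then show "z \<in> add_line A y" unfolding add_line_def using lin_subspaceD(1)[OF assms] by blast
qed

lemma lin_subspace_add_line:
  assumes "lin_subspace A"
  shows "lin_subspace (add_line A y)"
  unfolding lin_subspace_def
proof (intro conjI ballI allI)
  show "0 \<in> add_line A y"
    using lin_subspaceD(1)[OF assms] unfolding add_line_def by (force intro: exI[of _ 0])
next
  fix u v assume "u \<in> add_line A y" "v \<in> add_line A y"
  then obtain a t b s where "a \<in> A" "b \<in> A" "u = a + scale t y" "v = b + scale s y"
    unfolding add_line_def by blast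
  then have "a + b \<in> A" "u + v = (a + b) + scale (t + s) y"
    using lin_subspaceD(2)[OF assms] by (simp_all add: scale_add_left algebra_simps)
  then show "u + v \<in> add_line A y" unfolding add_line_def by blast
next
  fix c u assume "u \<in> add_line A y"
  then obtain a t where "a \<in> A" "u = a + scale t y" unfolding add_line_def by blast
  then have "scale c a \<in> A" "scale c u = scale c a + scale (c * t) y"
    using lin_subspaceD(3)[OF assms] by (simp_all add: scale_add scale_scale)
  then show "scale c u \<in> add_line A y" unfolding add_line_def by blast
qed

lemma card_pt_image:
  fixes V :: "(nat \<Rightarrow> 'a::{finite,field}) set"
  assumes "finite V" "0 \<notin> V" and closed: "\<And>y c. y \<in> V \<Longrightarrow> c \<noteq> 0 \<Longrightarrow> scale c y \<in> V"
  shows "(card (UNIV :: 'a set) - 1) * card (pt ` V) = card V"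
proof -
  have Union: "\<Union>(pt ` V) = V"
  proof
    show "\<Union>(pt ` V) \<subseteq> V" using closed by (auto simp: mem_pt_iff)
    show "V \<subseteq> \<Union>(pt ` V)" using pt_self by blast
  qed
  have "(card (UNIV :: 'a set) - 1) * card (pt ` V) = card (\<Union>(pt ` V))"
  proof (rule card_partition)
    show "finite (pt ` V)" "finite (\<Union>(pt ` V))" using assms(1) Union by simp_all
    show "card X = card (UNIV :: 'a set) - 1" if "X \<in> pt ` V" for X
      using that assms(2) card_pt by force
    show "X \<inter> Y = {}" if "X \<in> pt ` V" "Y \<in> pt ` V" "X \<noteq> Y" for X Y
      using that pt_eq_if_mem by blast
  qed
  then show ?thesis using Union by simp
qed

lemma add_line_subset_vecs: "A \<subseteq> vecs n \<Longrightarrow> y \<in> vecs n \<Longrightarrow> add_line A y \<subseteq> vecs n"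
  unfolding add_line_def using lin_subspaceD(2,3)[OF lin_subspace_vecs] by blast

lemma vspan_eq_add_line:
  assumes "lin_subspace A" "S \<subseteq> add_line A y" "A - {0} \<subseteq> S" "y \<in> S"
  shows "vspan S = add_line A y"
proof
  show "vspan S \<subseteq> add_line A y"
    by (rule vspan_least[OF lin_subspace_add_line[OF assms(1)] assms(2)])
  show "add_line A y \<subseteq> vspan S"
  proof
    fix v assume "v \<in> add_line A y"
    then obtain a t where v: "a \<in> A" "v = a + scale t y" by (auto simp: add_line_def)
    have "a \<in> vspan S"
      using subset_vspan assms(3) v(1) lin_subspaceD(1)[OF lin_subspace_vspan]
        by (cases "a = 0") auto
    moreover have "y \<in> vspan S" using subset_vspan assms(4) by blast
    ultimately show "v \<in> vspan S" unfolding v(2)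
      using lin_subspaceD(2,3)[OF lin_subspace_vspan] by blast
  qed
qed

lemma card_add_line:
  assumes "lin_subspace A" "x \<notin> A"
  shows "card (add_line A (x :: nat \<Rightarrow> 'a::{finite,field})) = card (UNIV :: 'a set) * card A"
proof -
  have "inj_on (\<lambda>(a, t). a + scale t x) (A \<times> UNIV)"
  proof (rule inj_onI, clarsimp)
    fix a t a' t' assume a: "a \<in> A" "a' \<in> A" and eq: "a + scale t x = a' + scale t' x"
    have "t = t'"
    proof (rule ccontr)
      assume "t \<noteq> t'"
      have "scale (t - t') x = a' - a" using eq by (simp add: scale_def fun_eq_iff algebra_simps)
      then have "scale (t - t') x \<in> A" using a lin_subspaceD(4)[OF assms(1)] by simp
      with \<open>t \<noteq> t'\<close> show False
        using lin_subspace_scale_iff[OF assms(1), of "t - t'" x] assms(2) by simp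
    qed
    with eq show "a = a' \<and> t = t'" by simp
  qed
  moreover have "(\<lambda>(a, t). a + scale t x) ` (A \<times> UNIV) = add_line A x" by (auto simp: add_line_def)
  ultimately show ?thesis by (metis card_image card_cartesian_product mult.commute)
qed

lemma pt_subset_line: "pt y \<subseteq> line y"
  by (auto simp: mem_pt_iff line_def)

lemma Union_pt_image:
  assumes "lin_subspace A"
  shows "\<Union>{pt v | v. v \<in> A \<and> v \<noteq> 0} = A - {0}"
proof
  show "\<Union>{pt v | v. v \<in> A \<and> v \<noteq> 0} \<subseteq> A - {0}"
  proof
    fix z assume "z \<in> \<Union>{pt v | v. v \<in> A \<and> v \<noteq> 0}"
    then obtain v c where "v \<in> A" "v \<noteq> 0" "c \<noteq> 0" "z = scale c v" by (auto simp: mem_pt_iff)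
    then show "z \<in> A - {0}" using lin_subspaceD(3)[OF assms] by (simp add: scale_eq_0_iff)
  qed
  show "A - {0} \<subseteq> \<Union>{pt v | v. v \<in> A \<and> v \<noteq> 0}"
    using pt_self by blast
qed

lemma pt_in_pt_image_iff:
  assumes "lin_subspace A" "y \<noteq> 0"
  shows "pt y \<in> {pt v | v. v \<in> A \<and> v \<noteq> 0} \<longleftrightarrow> y \<in> A"
proof
  assume "pt y \<in> {pt v | v. v \<in> A \<and> v \<noteq> 0}"
  then obtain v where "pt y = pt v" "v \<in> A" by blast
  then show "y \<in> A" using lin_subspaceD(3)[OF assms(1)] by (auto simp: pt_eq_iff)
qed (use assms(2) in blast)

section \<open>Type (ii) points\<close>

context quadratic_form
begin

lemma pt_in_zero_set_iff:
  assumes "v \<in> vecs n" "v \<noteq> 0"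
  shows "pt v \<in> zero_set n Q \<longleftrightarrow> Q v = 0"
proof
  assume "pt v \<in> zero_set n Q"
  then obtain w where "pt v = pt w" "Q w = 0" by (auto simp: zero_set_def)
  then show "Q v = 0" by (auto simp: pt_eq_iff Q_scale)
qed (use assms in \<open>auto simp: zero_set_def\<close>)

lemma join_subset_zero_set_iff:
  assumes "vspan (\<Union>S) = V" "V \<subseteq> vecs n"
  shows "join S \<subseteq> zero_set n Q \<longleftrightarrow> (\<forall>v\<in>V. Q v = 0)"
proof
  assume sub: "join S \<subseteq> zero_set n Q"
  show "\<forall>v\<in>V. Q v = 0"
  proof
    fix v assume "v \<in> V"
    show "Q v = 0"
    proof (cases "v = 0")
      case False
      then have "pt v \<in> join S" using \<open>v \<in> V\<close> assms(1) by (auto simp: join_def)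
      then show ?thesis using sub pt_in_zero_set_iff[OF _ False] \<open>v \<in> V\<close> assms(2) by blast
    qed simp
  qed
next
  assume "\<forall>v\<in>V. Q v = 0"
  then show "join S \<subseteq> zero_set n Q"
    using assms pt_in_zero_set_iff by (auto simp: join_def)
qed

lemma add_line_singular_iff:
  assumes "lin_subspace A" "\<forall>a\<in>A. Q a = 0"
  shows "(\<forall>v\<in>add_line A y. Q v = 0) \<longleftrightarrow> Q y = 0 \<and> (\<forall>a\<in>A. polar Q a y = 0)"
proof
  assume singular: "\<forall>v\<in>add_line A y. Q v = 0"
  have "a + scale 1 y \<in> add_line A y" if "a \<in> A" for a
    using that unfolding add_line_def by blast
  then have sum: "Q (a + y) = 0" if "a \<in> A" for a using singular that by simp
  have "Q y = 0" using sum[OF lin_subspaceD(1)[OF assms(1)]] by simp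
  then show "Q y = 0 \<and> (\<forall>a\<in>A. polar Q a y = 0)"
    using sum assms(2) by (simp add: polar_def)
next
  assume "Q y = 0 \<and> (\<forall>a\<in>A. polar Q a y = 0)"
  then show "\<forall>v\<in>add_line A y. Q v = 0"
    using assms(2) by (auto simp: add_line_def Q_add Q_scale polar_scale_right)
qed

lemma type2_pt_iff:
  assumes "lin_subspace A" "A \<subseteq> vecs n" "\<forall>a\<in>A. Q a = 0"
    and alpha: "alpha = {pt v | v. v \<in> A \<and> v \<noteq> 0}" and y: "y \<in> vecs n" "y \<noteq> 0"
  shows "pt y \<in> type2 n (zero_set n Q) alpha \<longleftrightarrow> y \<notin> A \<and> Q y = 0 \<and> (\<forall>a\<in>A. polar Q a y = 0)"
proof -
  have "\<Union>(insert (pt y) alpha) = pt y \<union> (A - {0})"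
    using Union_pt_image[OF assms(1)] alpha by simp
  moreover have "pt y \<subseteq> add_line A y"
    using pt_subset_line line_subset_add_line[OF assms(1)] by blast
  moreover have "vspan (pt y \<union> (A - {0})) = add_line A y"
    by (rule vspan_eq_add_line[OF assms(1)])
       (use \<open>pt y \<subseteq> _\<close> subset_add_line[of A y] pt_self[of y] in auto)
  ultimately have "vspan (\<Union>(insert (pt y) alpha)) = add_line A y" by simp
  then have "join (insert (pt y) alpha) \<subseteq> zero_set n Q \<longleftrightarrow> Q y = 0 \<and> (\<forall>a\<in>A. polar Q a y = 0)"
    using join_subset_zero_set_iff add_line_subset_vecs[OF assms(2) y(1)]
      add_line_singular_iff[OF assms(1,3)]
    by simp
  then show ?thesis
    using pt_in_points[OF y] pt_in_pt_image_iff[OF assms(1) y(2)] alpha by (auto simp: type2_def)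
qed

lemma adj_pt_iff:
  assumes x: "x \<in> vecs n" "x \<noteq> 0" "Q x = 0" and y: "y \<in> vecs n" "y \<noteq> 0"
  shows "adj (zero_set n Q) (pt x) (pt y) \<longleftrightarrow> Q y = 0 \<and> y \<notin> line x \<and> polar Q x y = 0"
proof -
  have "\<Union>{pt x, pt y} = (line x - {0}) \<union> pt y" using pt_eq_line_minus_zero[OF x(2)] by simp
  moreover have "pt y \<subseteq> add_line (line x) y"
    using pt_subset_line line_subset_add_line[OF lin_subspace_line] by blast
  moreover have "vspan ((line x - {0}) \<union> pt y) = add_line (line x) y"
    by (rule vspan_eq_add_line[OF lin_subspace_line])
       (use \<open>pt y \<subseteq> _\<close> subset_add_line[of "line x" y] pt_self[of y] in auto)
  ultimately have span: "vspan (\<Union>{pt x, pt y}) = add_line (line x) y" by simp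
  have line_vecs: "line x \<subseteq> vecs n" using x(1) lin_subspaceD(3)[OF lin_subspace_vecs]
    by (auto simp: line_def)
  have line_singular: "\<forall>a\<in>line x. Q a = 0" using x(3) by (auto simp: line_def Q_scale)
  have "join {pt x, pt y} \<subseteq> zero_set n Q \<longleftrightarrow> (\<forall>v\<in>add_line (line x) y. Q v = 0)"
    by (rule join_subset_zero_set_iff[OF span add_line_subset_vecs[OF line_vecs y(1)]])
  also have "\<dots> \<longleftrightarrow> Q y = 0 \<and> (\<forall>a\<in>line x. polar Q a y = 0)"
    by (rule add_line_singular_iff[OF lin_subspace_line line_singular])
  also have "\<dots> \<longleftrightarrow> Q y = 0 \<and> polar Q x y = 0"
    by (auto simp: line_def polar_scale_left intro: rangeI[of _ 1, simplified])
  finally have "join {pt x, pt y} \<subseteq> zero_set n Q \<longleftrightarrow> Q y = 0 \<and> polar Q x y = 0" .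
  then show ?thesis
    using pt_in_zero_set_iff x y pt_eq_pt_iff_line[OF x(2) y(2)] by (auto simp: adj_def)
qed

end

locale type2_vector = quadratic_form Q for Q :: "(nat \<Rightarrow> 'a::{finite,field}) \<Rightarrow> 'a" +
  fixes n :: nat and A :: "(nat \<Rightarrow> 'a) set" and x :: "nat \<Rightarrow> 'a"
  assumes nonsingular: "nonsingular_on Q (vecs n)"
    and lin_subspace_A: "lin_subspace A" and A_vecs: "A \<subseteq> vecs n" and A_singular: "\<forall>a\<in>A. Q a = 0"
    and x_vecs: "x \<in> vecs n" and x_notin_A: "x \<notin> A" and Q_x: "Q x = 0"
    and x_orth_A: "\<forall>a\<in>A. polar Q a x = 0"
begin

definition adjacent_vecs :: "(nat \<Rightarrow> 'a) set" where
  "adjacent_vecs =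
     {y \<in> vecs n. y \<notin> A \<and> Q y = 0 \<and> (\<forall>a\<in>A. polar Q a y = 0) \<and> y \<notin> line x \<and> polar Q x y = 0}"

lemma zero_in_A: "0 \<in> A"
  by (rule lin_subspaceD(1)[OF lin_subspace_A])

lemma x_nonzero: "x \<noteq> 0"
  using x_notin_A zero_in_A by auto

lemma orth_add_line_iff: "y \<in> orth Q (add_line A x) \<longleftrightarrow> (\<forall>a\<in>A. polar Q a y = 0) \<and> polar Q x y = 0"
proof
  assume y: "y \<in> orth Q (add_line A x)"
  have "a + scale 0 x \<in> add_line A x" "0 + scale 1 x \<in> add_line A x" if "a \<in> A" for a
    using that zero_in_A unfolding add_line_def by blast+
  then show "(\<forall>a\<in>A. polar Q a y = 0) \<and> polar Q x y = 0"
    using y zero_in_A by (auto simp: orth_def polar_commute)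
next
  assume "(\<forall>a\<in>A. polar Q a y = 0) \<and> polar Q x y = 0"
  then show "y \<in> orth Q (add_line A x)"
    by (auto simp: orth_def add_line_def polar_add_left polar_scale_left polar_commute[of y])
qed

lemma add_line_singular: "\<forall>v\<in>add_line A x. Q v = 0"
  using add_line_singular_iff[OF lin_subspace_A A_singular] Q_x x_orth_A by blast

lemma singular_orth_add_line:
  "singular_vecs Q (orth Q (add_line A x) \<inter> vecs n) = adjacent_vecs \<union> (A \<union> line x)"
proof -
  have "A \<union> line x \<subseteq> add_line A x"
    using subset_add_line line_subset_add_line[OF lin_subspace_A] by blast
  moreover have "add_line A x \<subseteq> singular_vecs Q (orth Q (add_line A x) \<inter> vecs n)"
    using polar_totally_singular[OF lin_subspace_add_line[OF lin_subspace_A] add_line_singular]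
      add_line_singular add_line_subset_vecs[OF A_vecs x_vecs]
    by (auto simp: singular_vecs_def orth_def polar_commute)
  ultimately show ?thesis
    by (auto simp: singular_vecs_def adjacent_vecs_def orth_add_line_iff)
qed

lemma card_adjacent_vecs:
  defines "q \<equiv> real (card (UNIV :: 'a set))"
  shows "real (card adjacent_vecs) = real (card (singular_vecs Q (vecs n))) - q ^ n
           + q ^ (n+1) / (q * q * real (card A)) - real (card A) - q + 1"
proof -
  have "line x \<subseteq> vecs n" "adjacent_vecs \<subseteq> vecs n"
    using x_vecs lin_subspaceD(3)[OF lin_subspace_vecs] by (auto simp: line_def adjacent_vecs_def)
  then have fin: "finite A" "finite (line x)" "finite adjacent_vecs"
    using finite_subset[OF _ finite_vecs] A_vecs by blast+
  have "scale t x \<in> A \<Longrightarrow> scale t x = 0" for t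
    using lin_subspace_scale_iff[OF lin_subspace_A] x_notin_A by (cases "t = 0") auto
  then have "A \<inter> line x = {0}"
    using zero_in_A lin_subspaceD(1)[OF lin_subspace_line] by (auto simp: line_def)
  then have card_A_line: "card (A \<union> line x) + 1 = card A + card (UNIV :: 'a set)"
    using card_Un_Int[OF fin(1,2)] card_line[OF x_nonzero] by simp
  have "card (singular_vecs Q (orth Q (add_line A x) \<inter> vecs n))
      = card adjacent_vecs + card (A \<union> line x)"
    unfolding singular_orth_add_line using fin
      by (intro card_Un_disjoint) (auto simp: adjacent_vecs_def)
  moreover have "real (card (singular_vecs Q (orth Q (add_line A x) \<inter> vecs n)))
      = real (card (singular_vecs Q (vecs n))) - q ^ n + q ^ (n+1) / (q * (q * real (card A)))"
    using card_singular_orth[OF quadratic_form_axioms finite_vecs lin_subspace_vecs nonsingular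
        lin_subspace_add_line[OF lin_subspace_A] add_line_subset_vecs[OF A_vecs x_vecs]
        add_line_singular]
      card_add_line[OF lin_subspace_A x_notin_A] card_field_ge_2[where 'a='a]
    by (simp add: card_vecs q_def)
  ultimately show ?thesis using card_A_line
    by (simp add: q_def algebra_simps)
qed

lemma scale_in_adjacent_vecs:
  assumes "y \<in> adjacent_vecs" "c \<noteq> 0"
  shows "scale c y \<in> adjacent_vecs"
proof -
  have "scale c y \<notin> line x"
    using assms by (auto simp: adjacent_vecs_def line_def scale_scale
        dest: arg_cong[where f="scale (inverse c)"])
  then show ?thesis
    using assms lin_subspace_scale_iff[OF lin_subspace_A] lin_subspaceD(3)[OF lin_subspace_vecs]
    by (auto simp: adjacent_vecs_def Q_scale polar_scale_right)
qed

lemma adjacent_type2_points: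
  assumes "alpha = {pt v | v. v \<in> A \<and> v \<noteq> 0}"
  shows "{Y \<in> type2 n (zero_set n Q) alpha. adj (zero_set n Q) (pt x) Y} = pt ` adjacent_vecs"
proof -
  have iff: "pt y \<in> type2 n (zero_set n Q) alpha \<and> adj (zero_set n Q) (pt x) (pt y)
      \<longleftrightarrow> y \<in> adjacent_vecs"
    if "y \<in> vecs n" "y \<noteq> 0" for y
    using type2_pt_iff[OF lin_subspace_A A_vecs A_singular assms that]
      adj_pt_iff[OF x_vecs x_nonzero Q_x that] that
    by (auto simp: adjacent_vecs_def)
  show ?thesis
  proof
    show "{Y \<in> type2 n (zero_set n Q) alpha. adj (zero_set n Q) (pt x) Y} \<subseteq> pt ` adjacent_vecs"
    proof clarify
      fix Y assume Y: "Y \<in> type2 n (zero_set n Q) alpha" "adj (zero_set n Q) (pt x) Y"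
      then have "Y \<in> points n" by (simp add: type2_def)
      then obtain y where "Y = pt y" "y \<in> vecs n" "y \<noteq> 0" by (rule points_cases)
      with Y iff show "Y \<in> pt ` adjacent_vecs" by blast
    qed
    show "pt ` adjacent_vecs \<subseteq> {Y \<in> type2 n (zero_set n Q) alpha. adj (zero_set n Q) (pt x) Y}"
    proof
      fix Y assume "Y \<in> pt ` adjacent_vecs"
      then obtain y where "Y = pt y" "y \<in> adjacent_vecs" by blast
      moreover from this have "y \<in> vecs n" "y \<noteq> 0" using zero_in_A by (auto simp: adjacent_vecs_def)
      ultimately show "Y \<in> {Y \<in> type2 n (zero_set n Q) alpha. adj (zero_set n Q) (pt x) Y}"
        using iff by blast
    qed
  qed
qed

end

lemma deg_eq:
  fixes q :: real
  assumes "q > 1" and n: "n = (case T of Parabolic \<Rightarrow> 2*r | _ \<Rightarrow> 2*r+1)"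
  defines "k \<equiv> witt_index T r"
  shows "(q - 1) * deg T q r s
           = q ^ k - q ^ (n - k) + q ^ (n+1) / (q * q * q ^ (s+1)) - q ^ (s+1) - q + 1"
proof -
  have q: "q \<noteq> 0" "q - 1 \<noteq> 0" using assms(1) by auto
  define u where "u = q powi (int s)"
  define w where "w = q powi (int r - int s)"
  have "q ^ r = q powi (int s + (int r - int s))" by simp
  also have "\<dots> = u * w" unfolding u_def w_def by (rule power_int_add) (simp add: q)
  finally have r: "q ^ r = u * w" .
  have "u \<noteq> 0" using q by (simp add: u_def)
  have pw: "q ^ (r+1) = q * (u * w)" "q ^ (2*r+1) = q * (u * w) * (u * w)"
    "q ^ (2*r+2) = q * q * (u * w) * (u * w)"
    unfolding r[symmetric] by (simp_all add: mult_2 power_add)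
  have s: "q ^ (s+1) = q * u" "q ^ (s+2) = q * q * u" "q ^ s = u" by (simp_all add: u_def)
  have w: "q powi (int r - int s - 1) = w / q" "q powi (int r - int s - 2) = w / q^2"
    using q by (simp_all add: w_def power_int_diff)
  show ?thesis
  proof (cases T)
    case Elliptic
    then have deg: "deg T q r s = (q*u - 1) + q*q*u*(w/q + 1)*(w/q^2 - 1)/(q-1)"
      unfolding deg_def Let_def by (simp only: w s qtype.case prod.case)
    have "k = r" "n - k = r + 1" "n + 1 = 2 * r + 2" using Elliptic n
      by (simp_all add: k_def witt_index_def)
    then have "q ^ k = u * w" "q ^ (n - k) = q * (u * w)" "q ^ (n + 1) = q * q * (u * w) * (u * w)"
      using r pw by simp_all
    then show ?thesis unfolding deg using q s \<open>u \<noteq> 0\<close> by (simp add: field_simps power2_eq_square)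
  next
    case Hyperbolic
    then have deg: "deg T q r s = (q*u - 1) + q*q*u*(w/q^2 + 1)*(w/q - 1)/(q-1)"
      unfolding deg_def Let_def by (simp only: w s qtype.case prod.case)
    have "k = r + 1" "n - k = r" "n + 1 = 2 * r + 2" using Hyperbolic n
      by (simp_all add: k_def witt_index_def)
    then have "q ^ k = q * (u * w)" "q ^ (n - k) = u * w" "q ^ (n + 1) = q * q * (u * w) * (u * w)"
      using r pw by simp_all
    then show ?thesis unfolding deg using q s \<open>u \<noteq> 0\<close> by (simp add: field_simps power2_eq_square)
  next
    case Parabolic
    then have deg: "deg T q r s = (q*u - 1) + q*q*u*(w/q^2 + 1)*(w/q^2 - 1)/(q-1)"
      unfolding deg_def Let_def by (simp only: w s qtype.case prod.case)
    have "k = r" "n - k = r" "n + 1 = 2 * r + 1" using Parabolic n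
      by (simp_all add: k_def witt_index_def)
    then have "q ^ k = u * w" "q ^ (n - k) = u * w" "q ^ (n + 1) = q * (u * w) * (u * w)"
      using r pw by simp_all
    then show ?thesis unfolding deg using q s \<open>u \<noteq> 0\<close> by (simp add: field_simps power2_eq_square)
  qed
qed

lemma subspace_vectors:
  fixes alpha :: "(nat \<Rightarrow> 'a::{finite,field}) set set"
  assumes "is_subspace n s alpha"
  obtains A where "lin_subspace A" "A \<subseteq> vecs n" "card A = card (UNIV :: 'a set) ^ (s+1)"
    and "alpha = {pt v | v. v \<in> A \<and> v \<noteq> 0}"
proof -
  obtain b where b: "\<forall>j<s+1. b j \<in> vecs n" "indep b (s+1)"
    and alpha: "alpha = {pt v | v. v \<in> vspan (b ` {..<s+1}) \<and> v \<noteq> (\<lambda>i. 0)}"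
    using assms unfolding is_subspace_def by blast
  have "vspan (b ` {..<s+1}) \<subseteq> vecs n" using b(1) by (intro vspan_least[OF lin_subspace_vecs]) auto
  then show thesis
    using lin_subspace_vspan card_vspan_indep[OF b(2)] alpha
      by (intro that[of "vspan (b ` {..<s+1})"]) simp_all
qed

lemma (in quadratic_form) singular_if_pt_image_subset_zero_set:
  assumes "A \<subseteq> vecs n" "{pt v | v. v \<in> A \<and> v \<noteq> 0} \<subseteq> zero_set n Q"
  shows "\<forall>a\<in>A. Q a = 0"
proof
  fix a assume "a \<in> A"
  show "Q a = 0"
  proof (cases "a = 0")
    case False
    then have "pt a \<in> zero_set n Q" using assms(2) \<open>a \<in> A\<close> by blast
    then show ?thesis using pt_in_zero_set_iff \<open>a \<in> A\<close> assms(1) False by blast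
  qed simp
qed

lemma (in type2_vector) card_adjacent_type2_points:
  defines "q \<equiv> real (card (UNIV :: 'a set))"
  assumes "alpha = {pt v | v. v \<in> A \<and> v \<noteq> 0}"
  shows "(q - 1) * real (card {Y \<in> type2 n (zero_set n Q) alpha. adj (zero_set n Q) (pt x) Y})
           = real (card (singular_vecs Q (vecs n))) - q ^ n + q ^ (n+1) / (q * q * real (card A))
             - real (card A) - q + 1"
proof -
  have "adjacent_vecs \<subseteq> vecs n" "0 \<notin> adjacent_vecs"
    using zero_in_A by (auto simp: adjacent_vecs_def)
  then have "(card (UNIV :: 'a set) - 1) * card (pt ` adjacent_vecs) = card adjacent_vecs"
    using finite_subset[OF _ finite_vecs] scale_in_adjacent_vecs by (intro card_pt_image) auto
  moreover have "real (card (UNIV :: 'a set) - 1) = q - 1"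
    using card_field_ge_2[where 'a='a] by (simp add: q_def of_nat_diff)
  ultimately have "(q - 1) * real (card (pt ` adjacent_vecs)) = real (card adjacent_vecs)"
    by (metis of_nat_mult)
  then show ?thesis
    using card_adjacent_vecs by (simp add: adjacent_type2_points[OF assms(2)] q_def)
qed

lemma (in quadratic_form) type2_cases:
  assumes "lin_subspace A" "A \<subseteq> vecs n" "\<forall>a\<in>A. Q a = 0"
    and "alpha = {pt v | v. v \<in> A \<and> v \<noteq> 0}" "X \<in> type2 n (zero_set n Q) alpha"
  obtains x where "X = pt x" "x \<in> vecs n" "x \<notin> A" "Q x = 0" "\<forall>a\<in>A. polar Q a x = 0"
proof -
  obtain x where x: "X = pt x" "x \<in> vecs n" "x \<noteq> 0"
    using assms(5) by (auto simp: type2_def elim: points_cases)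
  then show thesis using that type2_pt_iff[OF assms(1-4) x(2,3)] assms(5) by blast
qed

theorem lemma4p2:
  fixes QS alpha :: "(nat \<Rightarrow> 'a::{finite,field}) set set"
    and T :: qtype and n r s :: nat
  assumes "is_quadric T n r QS"
    and "int s < proj_index n QS"
    and "is_subspace n s alpha"
    and "alpha \<subseteq> QS"
  shows "\<forall>X \<in> type2 n QS alpha.
           real (card {Y \<in> type2 n QS alpha. adj QS X Y}) = deg T (real (card (UNIV :: 'a set))) r s"
proof
  fix X assume X: "X \<in> type2 n QS alpha"
  define q where "q = real (card (UNIV :: 'a set))"
  have "q > 1" using card_field_ge_2[where 'a='a] by (simp add: q_def)
  obtain Q where Q: "quadratic_form Q" "nonsingular_on Q (vecs n)" "QS = zero_set n Q"
    and card_singular: "real (card (singular_vecs Q (vecs n)))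
                          = q ^ n + q ^ witt_index T r - q ^ (n - witt_index T r)"
    and n: "n = (case T of Parabolic \<Rightarrow> 2*r | _ \<Rightarrow> 2*r+1)"
    using quadric_equation[OF assms(1)] unfolding q_def by blast
  interpret quadratic_form Q by fact
  obtain A where A: "lin_subspace A" "A \<subseteq> vecs n" "card A = card (UNIV :: 'a set) ^ (s+1)"
    and alpha: "alpha = {pt v | v. v \<in> A \<and> v \<noteq> 0}"
    using subspace_vectors[OF assms(3)] by blast
  have A_singular: "\<forall>a\<in>A. Q a = 0"
    using singular_if_pt_image_subset_zero_set A(2) assms(4) Q(3) alpha by blast
  obtain x where x: "X = pt x" "x \<in> vecs n" "x \<notin> A" "Q x = 0" "\<forall>a\<in>A. polar Q a x = 0"
    using type2_cases[OF A(1,2) A_singular alpha] X Q(3) by blast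
  interpret type2_vector Q n A x
    using Q(2) A A_singular x by unfold_locales auto
  have "(q - 1) * real (card {Y \<in> type2 n QS alpha. adj QS X Y}) = (q - 1) * deg T q r s"
    using card_adjacent_type2_points[OF alpha] card_singular deg_eq[OF \<open>q > 1\<close> n, of s] A(3)
    unfolding Q(3) x(1) by (simp add: q_def)
  with \<open>q > 1\<close> show "real (card {Y \<in> type2 n QS alpha. adj QS X Y}) = deg T q r s"
    by simp
qed

end
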